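(* Assume the setting and assumptions (A1)–(A5) described in the context, so that the closure of $A$ generates a conservative Markov semigroup $\{T(t)\}_{t\ge0}$ in $C(\bar L)$, and assume additionally that $\iota_n(M_n)$ converges weakly to a probability measure $P$ on $\bar L$. Let $X(t)$ be the Markov process in $\bar L$ with transition semigroup $\{T(t)\}$ and initial distribution $P$ (which is stationary), and for each $n$ let $(\lambda_n(k))_{k=0,1,2,\dots}$ be the stationary Markov chain on $L_n$ with transition matrix $T_n$ and initial distribution $M_n$. Then the finite-dimensional distributions of the chains converge to those of $X$ under the time scaling in which one step corresponds to time $\varepsilon_n$: for any $0\le t_1<\dots<t_k$ and $f_1,\dots,f_k\in C(\bar L)$, $$\lim_{n\to\infty}\mathbb E\Big[\prod_{i=1}^k f_i\big(\iota_n(\lambda_n([\varepsilon_n^{-1}t_i]))\big)\Big]=\mathbb E\Big[\prod_{i=1}^kf_i(X(t_i))\Big].$$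
   Context: $L=\bigsqcup_{n\ge0}L_n$ is a graded set with $L_0$ a singleton and each $L_n$ finite; $p^\downarrow:L\times L\to[0,\infty)$ vanishes unless $|\lambda|=|\mu|+1$ and $\sum_{\mu\in L_{|\lambda|-1}}p^\downarrow(\lambda,\mu)=1$ for $|\lambda|\ge1$. $\{M_n\}$ is a coherent system (probability measures on $L_n$ with $\sum_{\lambda\in L_n}M_n(\lambda)p^\downarrow(\lambda,\mu)=M_{n-1}(\mu)$) with $M_n(\lambda)>0$ everywhere; $p^\uparrow(\lambda,\nu)=\frac{M_{n+1}(\nu)}{M_n(\lambda)}p^\downarrow(\nu,\lambda)$; $T_n(\lambda,\tilde\lambda)=\sum_{\nu\in L_{n+1}}p^\uparrow(\lambda,\nu)p^\downarrow(\nu,\tilde\lambda)$, acting on real functions on $L_n$ (norm $\|g\|_n=\sup|g|$) by $(T_ng)(\lambda)=\sum_{\tilde\lambda}T_n(\lambda,\tilde\lambda)g(\tilde\lambda)$. $\bar L$ is a topological space, $\iota_n:L_n\to\bar L$ injective, $\pi_n:C(\bar L)\to C(L_n)$, $(\pi_nf)(\lambda)=f(\iota_n(\lambda))$. Assumptions: (A1) $\bar L$ compact metrizable separable; (A2) every nonempty open set meets $\iota_n(L_n)$ for all large $n$; (A3) there is a dense subspace $\mathcal F\subset C(\bar L)$ with an exhaustive ascending sequence of finite-dimensional subspaces $\mathcal F^m$ such that for each $m$ and all large $n$, $\pi_n$ is injective on $\mathcal F^m$ and $\pi_n(\mathcal F^m)$ is $T_n$-invariant; (A4) there are $\varepsilon_n>0$,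 $\varepsilon_n\to0$, such that for $f\in\mathcal F^m$ the elements $g_n\in\mathcal F^m$ with $\pi_n(g_n)=\varepsilon_n^{-1}(T_n-\mathbf 1)\pi_n f$ converge in $\mathcal F^m$ to a limit $Af$; (A5) $1\in\mathcal F$. *)

theory Defs
  imports "HOL-Probability.Probability"
begin

text \<open>The graded set L is modelled by a type 'l together with a degree map
  deg; the level L_n is the set of elements of degree n.\<close>

definition level :: "('l \<Rightarrow> nat) \<Rightarrow> nat \<Rightarrow> 'l set" where
  "level deg n = {lam. deg lam = n}"

text \<open>Standing assumptions on L, the down transition function pd and the
  coherent system M (M n is the probability measure on L_n, given by its weights).\<close>

definition coherent_setting ::
  "('l \<Rightarrow> nat) \<Rightarrow> ('l \<Rightarrow> 'l \<Rightarrow> real) \<Rightarrow> (nat \<Rightarrow> 'l \<Rightarrow> real) \<Rightarrow> bool" where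
  "coherent_setting deg pd M \<longleftrightarrow>
     card (level deg 0) = 1 \<and>
     (\<forall>n. finite (level deg n)) \<and>
     (\<forall>lam mu. pd lam mu \<ge> 0) \<and>
     (\<forall>lam mu. deg lam \<noteq> deg mu + 1 \<longrightarrow> pd lam mu = 0) \<and>
     (\<forall>lam. deg lam \<ge> 1 \<longrightarrow> (\<Sum>mu\<in>level deg (deg lam - 1). pd lam mu) = 1) \<and>
     (\<forall>n. \<forall>lam\<in>level deg n. M n lam > 0) \<and>
     (\<forall>n. (\<Sum>lam\<in>level deg n. M n lam) = 1) \<and>
     (\<forall>n\<ge>1. \<forall>mu\<in>level deg (n - 1).
        (\<Sum>lam\<in>level deg n. M n lam * pd lam mu) = M (n - 1) mu)"

definition pup ::
  "('l \<Rightarrow> nat) \<Rightarrow> ('l \<Rightarrow> 'l \<Rightarrow> real) \<Rightarrow> (nat \<Rightarrow> 'l \<Rightarrow> real) \<Rightarrow> 'l \<Rightarrow> 'l \<Rightarrow> real" where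
  "pup deg pd M lam nu = M (Suc (deg lam)) nu / M (deg lam) lam * pd nu lam"

definition Tmat ::
  "('l \<Rightarrow> nat) \<Rightarrow> ('l \<Rightarrow> 'l \<Rightarrow> real) \<Rightarrow> (nat \<Rightarrow> 'l \<Rightarrow> real) \<Rightarrow> nat \<Rightarrow> 'l \<Rightarrow> 'l \<Rightarrow> real" where
  "Tmat deg pd M n lam lam' = (\<Sum>nu\<in>level deg (Suc n). pup deg pd M lam nu * pd nu lam')"

definition Tapp ::
  "('l \<Rightarrow> nat) \<Rightarrow> ('l \<Rightarrow> 'l \<Rightarrow> real) \<Rightarrow> (nat \<Rightarrow> 'l \<Rightarrow> real) \<Rightarrow> nat \<Rightarrow> ('l \<Rightarrow> real) \<Rightarrow> 'l \<Rightarrow> real" where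
  "Tapp deg pd M n g lam = (\<Sum>lam'\<in>level deg n. Tmat deg pd M n lam lam' * g lam')"

definition generator_graph ::
  "(real \<Rightarrow> ('x::topological_space \<Rightarrow>\<^sub>C real) \<Rightarrow> ('x \<Rightarrow>\<^sub>C real)) \<Rightarrow> (('x \<Rightarrow>\<^sub>C real) \<times> ('x \<Rightarrow>\<^sub>C real)) set" where
  "generator_graph T = {(f, g). ((\<lambda>h. (1 / h) *\<^sub>R (T h f - f)) \<longlongrightarrow> g) (at_right 0)}"

definition markov_semigroup ::
  "(real \<Rightarrow> ('x::topological_space \<Rightarrow>\<^sub>C real) \<Rightarrow> ('x \<Rightarrow>\<^sub>C real)) \<Rightarrow> bool" where
  "markov_semigroup T \<longleftrightarrow>
     (\<forall>t\<ge>0. bounded_linear (T t)) \<and>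
     (\<forall>f. T 0 f = f) \<and>
     (\<forall>s\<ge>0. \<forall>t\<ge>0. \<forall>f. T (s + t) f = T s (T t f)) \<and>
     (\<forall>f. continuous_on {0..} (\<lambda>t. T t f)) \<and>
     (\<forall>t\<ge>0. T t (const_bcontfun 1) = const_bcontfun 1) \<and>
     (\<forall>t\<ge>0. \<forall>f. (\<forall>x. apply_bcontfun f x \<ge> 0) \<longrightarrow> (\<forall>x. apply_bcontfun (T t f) x \<ge> 0))"

definition nat_filtration :: "'w measure \<Rightarrow> (real \<Rightarrow> 'w \<Rightarrow> 'x::topological_space) \<Rightarrow> real \<Rightarrow> 'w measure" where
  "nat_filtration Om X s =
     sigma (space Om) (\<Union>u\<in>{0..s}. {X u -` B \<inter> space Om | B. B \<in> sets borel})"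

definition markov_process ::
  "'w measure \<Rightarrow> (real \<Rightarrow> 'w \<Rightarrow> 'x::topological_space) \<Rightarrow>
   (real \<Rightarrow> ('x \<Rightarrow>\<^sub>C real) \<Rightarrow> ('x \<Rightarrow>\<^sub>C real)) \<Rightarrow> 'x measure \<Rightarrow> bool" where
  "markov_process Om X T P \<longleftrightarrow>
     prob_space Om \<and>
     (\<forall>t\<ge>0. X t \<in> measurable Om borel) \<and>
     distr Om borel (X 0) = P \<and>
     (\<forall>s\<ge>0. \<forall>t\<ge>0. \<forall>f.
        AE w in Om. real_cond_exp Om (nat_filtration Om X s) (\<lambda>w. apply_bcontfun f (X (s + t) w)) w
                    = apply_bcontfun (T t f) (X s w))"

definition markov_chain ::
  "'v measure \<Rightarrow> (nat \<Rightarrow> 'v \<Rightarrow> 'l) \<Rightarrow> 'l set \<Rightarrow> ('l \<Rightarrow> real) \<Rightarrow> ('l \<Rightarrow> 'l \<Rightarrow> real) \<Rightarrow> bool" where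
  "markov_chain Om Y S mu0 Q \<longleftrightarrow>
     prob_space Om \<and>
     (\<forall>k. Y k \<in> measurable Om (count_space UNIV)) \<and>
     (\<forall>k. \<forall>w\<in>space Om. Y k w \<in> S) \<and>
     (\<forall>k. \<forall>x::nat \<Rightarrow> 'l. (\<forall>i\<le>k. x i \<in> S) \<longrightarrow>
        measure Om {w\<in>space Om. \<forall>i\<le>k. Y i w = x i}
          = mu0 (x 0) * (\<Prod>i<k. Q (x i) (x (Suc i))))"

end

theory Submission
  imports Defs
begin

text \<open>On the grid \<open>\<iota>\<^sub>n(L\<^sub>n)\<close> the transition operator \<open>T\<^sub>n\<close> of the chain acts on each
  finite-dimensional space \<open>\<F>\<^sup>m\<close> like \<open>1 + \<epsilon>\<^sub>n A\<close> up to an error \<open>o(\<epsilon>\<^sub>n)\<close>, uniformly on bounded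
  sets because all norms on \<open>\<F>\<^sup>m\<close> are equivalent. Since every \<open>T(t)\<close> is a contraction, the errors
  of \<open>\<lfloor>t/\<epsilon>\<^sub>n\<rfloor>\<close> such steps add up to \<open>o(1)\<close>, so the \<open>\<lfloor>t/\<epsilon>\<^sub>n\<rfloor>\<close>-th power of \<open>T\<^sub>n\<close>
  approximates \<open>T(t)\<close> uniformly on the grid, first on \<open>\<F>\<^sup>m\<close> and then, by density and
  contractivity, on all continuous functions.

  The finite-dimensional distributions follow by induction on the number of times: the Markov
  properties of the chain and of \<open>X\<close> merge the last two factors into \<open>f\<^sub>k \<cdot> T(t\<^sub>k\<^sub>+\<^sub>1 - t\<^sub>k) f\<^sub>k\<^sub>+\<^sub>1\<close>,
  whose discrete counterpart is again uniformly close to it; a single time is handled by the weak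
  convergence of the initial laws \<open>\<iota>\<^sub>n(M\<^sub>n)\<close> to \<open>P\<close>.\<close>

section \<open>Coefficients in finite-dimensional subspaces\<close>

lemma closed_span_if_coefficient_bound:
  fixes B :: "'a::real_normed_vector set"
  assumes B: "finite B" and \<delta>: "\<delta> > 0"
    and bound: "\<And>c. \<delta> * (\<Sum>b\<in>B. \<bar>c b\<bar>) \<le> norm (\<Sum>b\<in>B. c b *\<^sub>R b)"
  shows "closed (span B)"
  unfolding closed_sequential_limits
proof (intro allI impI, elim conjE)
  fix v and v0 assume "\<forall>k. v k \<in> span B" and lim: "v \<longlonglongrightarrow> v0"
  then have "\<forall>k. \<exists>c. v k = (\<Sum>b\<in>B. c b *\<^sub>R b)"
    using span_finite[OF B] by auto
  then obtain c where c: "\<And>k. v k = (\<Sum>b\<in>B. c k b *\<^sub>R b)" by metis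
  have coeff_Cauchy: "Cauchy (\<lambda>k. c k b)" if "b \<in> B" for b
  proof (rule metric_CauchyI)
    fix e :: real assume "e > 0"
    then obtain N where N: "\<And>m n. m \<ge> N \<Longrightarrow> n \<ge> N \<Longrightarrow> dist (v m) (v n) < \<delta> * e"
      using lim[THEN LIMSEQ_imp_Cauchy] \<delta> unfolding Cauchy_def by (meson mult_pos_pos)
    have "dist (c m b) (c n b) < e" if "m \<ge> N" "n \<ge> N" for m n
    proof -
      have "\<delta> * \<bar>c m b - c n b\<bar> \<le> \<delta> * (\<Sum>b\<in>B. \<bar>c m b - c n b\<bar>)"
        using \<open>b \<in> B\<close> B \<delta> by (intro mult_left_mono member_le_sum) auto
      also have "\<dots> \<le> norm (\<Sum>b\<in>B. (c m b - c n b) *\<^sub>R b)" by (rule bound)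
      also have "\<dots> = dist (v m) (v n)"
        by (simp add: c dist_norm scaleR_diff_left sum_subtractf)
      also have "\<dots> < \<delta> * e" using N that by blast
      finally show ?thesis using \<delta> by (simp add: dist_real_def)
    qed
    then show "\<exists>N. \<forall>m\<ge>N. \<forall>n\<ge>N. dist (c m b) (c n b) < e" by blast
  qed
  define c0 where "c0 b = lim (\<lambda>k. c k b)" for b
  have "(\<lambda>k. c k b) \<longlonglongrightarrow> c0 b" if "b \<in> B" for b
    using coeff_Cauchy[OF that] unfolding c0_def by (simp add: Cauchy_convergent_iff convergent_LIMSEQ_iff)
  then have "v \<longlonglongrightarrow> (\<Sum>b\<in>B. c0 b *\<^sub>R b)"
    unfolding c by (intro tendsto_sum tendsto_scaleR tendsto_const) auto
  with lim have "v0 = (\<Sum>b\<in>B. c0 b *\<^sub>R b)" using LIMSEQ_unique by blast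
  then show "v0 \<in> span B" using span_finite[OF B] by auto
qed

lemma coefficient_bound_insert:
  fixes B :: "'a::real_normed_vector set"
  assumes "finite B" "b0 \<notin> B" "\<delta> > 0" "\<And>c. \<delta> * (\<Sum>b\<in>B. \<bar>c b\<bar>) \<le> norm (\<Sum>b\<in>B. c b *\<^sub>R b)"
    and "\<eta> > 0" "\<And>v. v \<in> span B \<Longrightarrow> \<eta> \<le> norm (b0 - v)"
  shows "\<exists>\<delta>'>0. \<forall>c. \<delta>' * (\<Sum>b\<in>insert b0 B. \<bar>c b\<bar>) \<le> norm (\<Sum>b\<in>insert b0 B. c b *\<^sub>R b)"
proof -
  define K where "K = 1 / \<eta> + (1 + norm b0 / \<eta>) / \<delta>"
  have "K > 0" unfolding K_def using assms(3,5) by (intro add_pos_nonneg) auto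
  have "(\<Sum>b\<in>insert b0 B. \<bar>c b\<bar>) \<le> K * norm (\<Sum>b\<in>insert b0 B. c b *\<^sub>R b)" for c
  proof -
    define v where "v = (\<Sum>b\<in>B. c b *\<^sub>R b)"
    define h where "h = c b0 *\<^sub>R b0 + v"
    have h: "(\<Sum>b\<in>insert b0 B. c b *\<^sub>R b) = h" unfolding h_def v_def using assms(1,2) by simp
    have v: "v \<in> span B" unfolding v_def by (intro span_sum span_scale span_base)
    have "\<bar>c b0\<bar> * \<eta> \<le> norm h"
    proof (cases "c b0 = 0")
      case False
      have "h = c b0 *\<^sub>R (b0 - (- (1 / c b0)) *\<^sub>R v)"
        using False unfolding h_def by (simp add: scaleR_diff_right scaleR_add_right)
      moreover have "\<eta> \<le> norm (b0 - (- (1 / c b0)) *\<^sub>R v)" using v by (intro assms(6) span_scale)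
      ultimately show ?thesis by (simp add: mult_left_mono)
    qed simp
    then have cb0: "\<bar>c b0\<bar> \<le> norm h / \<eta>" using assms(5) by (simp add: field_simps)
    have "norm v \<le> norm h + \<bar>c b0\<bar> * norm b0"
      using norm_triangle_ineq4[of h "c b0 *\<^sub>R b0"] by (simp add: h_def)
    also have "\<dots> \<le> norm h * (1 + norm b0 / \<eta>)"
      using mult_right_mono[OF cb0 norm_ge_zero[of b0]] by (simp add: algebra_simps)
    finally have "\<delta> * (\<Sum>b\<in>B. \<bar>c b\<bar>) \<le> norm h * (1 + norm b0 / \<eta>)"
      using assms(4)[of c] unfolding v_def by linarith
    then have "(\<Sum>b\<in>B. \<bar>c b\<bar>) \<le> norm h * (1 + norm b0 / \<eta>) / \<delta>"
      using assms(3) by (simp add: pos_le_divide_eq mult.commute)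
    with cb0 have "\<bar>c b0\<bar> + (\<Sum>b\<in>B. \<bar>c b\<bar>) \<le> norm h * K"
      unfolding K_def by (simp add: algebra_simps)
    then show ?thesis using assms(1,2) h by (simp add: mult.commute)
  qed
  then show ?thesis using \<open>K > 0\<close>
    by (intro exI[of _ "1 / K"]) (simp add: divide_simps mult.commute)
qed

text \<open>The induction step uses that the span of the smaller basis is closed, so the new basis
  vector keeps a positive distance from it.\<close>

lemma independent_coefficient_bound:
  fixes B :: "'a::real_normed_vector set"
  assumes "finite B" "independent B"
  shows "\<exists>\<delta>>0. \<forall>c. \<delta> * (\<Sum>b\<in>B. \<bar>c b\<bar>) \<le> norm (\<Sum>b\<in>B. c b *\<^sub>R b)"
  using assms
proof (induction rule: finite_induct)
  case empty
  then show ?case by (intro exI[of _ 1]) auto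
next
  case (insert b0 B)
  then have "independent B" and b0: "b0 \<notin> span B"
    by (auto simp: independent_insert)
  obtain \<delta> where \<delta>: "\<delta> > 0" "\<And>c. \<delta> * (\<Sum>b\<in>B. \<bar>c b\<bar>) \<le> norm (\<Sum>b\<in>B. c b *\<^sub>R b)"
    using insert.IH[OF \<open>independent B\<close>] by blast
  have "open (- span B)"
    using closed_span_if_coefficient_bound[OF insert.hyps(1) \<delta>] by (simp add: open_Compl)
  then obtain \<eta> where \<eta>: "\<eta> > 0" "ball b0 \<eta> \<subseteq> - span B"
    using b0 open_contains_ball by blast
  have "\<eta> \<le> norm (b0 - v)" if "v \<in> span B" for v
    using \<eta>(2) that by (force simp: dist_norm subset_eq)
  with insert.hyps \<delta> \<eta>(1) show ?case by (intro coefficient_bound_insert)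
qed

lemma representation_abs_sum_le:
  fixes B :: "'a::real_normed_vector set"
  assumes "finite B" "independent B"
  obtains C where "C \<ge> 0" "\<And>h. h \<in> span B \<Longrightarrow> (\<Sum>b\<in>B. \<bar>representation B h b\<bar>) \<le> C * norm h"
proof -
  obtain \<delta> where \<delta>: "\<delta> > 0" "\<And>c. \<delta> * (\<Sum>b\<in>B. \<bar>c b\<bar>) \<le> norm (\<Sum>b\<in>B. c b *\<^sub>R b)"
    using independent_coefficient_bound[OF assms] by blast
  have "(\<Sum>b\<in>B. \<bar>representation B h b\<bar>) \<le> 1 / \<delta> * norm h" if "h \<in> span B" for h
    using \<delta>(2)[of "representation B h"] \<delta>(1) that assms
    by (simp add: sum_representation_eq field_simps)
  with \<delta>(1) show thesis by (intro that[of "1 / \<delta>"]) auto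
qed

lemma norm_representation_extension_diff_le:
  fixes B :: "'a::real_normed_vector set" and G :: "'a \<Rightarrow> 'b::real_normed_vector"
  assumes "finite B" "independent B" "h \<in> span B" "linear D"
  shows "norm ((\<Sum>b\<in>B. representation B h b *\<^sub>R G b) - D h)
           \<le> (\<Sum>b\<in>B. \<bar>representation B h b\<bar>) * (\<Sum>b\<in>B. norm (G b - D b))"
proof -
  have "D h = (\<Sum>b\<in>B. representation B h b *\<^sub>R D b)"
    using assms by (subst (1) sum_representation_eq[symmetric, of B h B])
      (auto simp: linear_sum linear_scale)
  then have "norm ((\<Sum>b\<in>B. representation B h b *\<^sub>R G b) - D h)
      = norm (\<Sum>b\<in>B. representation B h b *\<^sub>R (G b - D b))"
    by (simp add: sum_subtractf scaleR_diff_right)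
  also have "\<dots> \<le> (\<Sum>b\<in>B. \<bar>representation B h b\<bar> * norm (G b - D b))"
    by (rule order_trans[OF norm_sum]) simp
  also have "\<dots> \<le> (\<Sum>b\<in>B. \<bar>representation B h b\<bar> * (\<Sum>b\<in>B. norm (G b - D b)))"
    using assms(1) by (intro sum_mono mult_left_mono member_le_sum) auto
  finally show ?thesis by (simp add: sum_distrib_right)
qed

lemma norm_Euler_step_diff_le:
  fixes B :: "'a::real_normed_vector set" and G :: "'a \<Rightarrow> 'a"
  assumes "finite B" "independent B" "h \<in> span B" "linear S" "\<epsilon> > 0"
  shows "norm (h + \<epsilon> *\<^sub>R (\<Sum>b\<in>B. representation B h b *\<^sub>R G b) - S h)
           \<le> \<epsilon> * ((\<Sum>b\<in>B. \<bar>representation B h b\<bar>) * (\<Sum>b\<in>B. norm (G b - (1 / \<epsilon>) *\<^sub>R (S b - b))))"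
proof -
  define D where "D h = (1 / \<epsilon>) *\<^sub>R (S h - h)" for h
  have "linear D"
    using assms(4) unfolding D_def by (intro linearI) (simp_all add: linear_add linear_scale algebra_simps)
  have "h + \<epsilon> *\<^sub>R (\<Sum>b\<in>B. representation B h b *\<^sub>R G b) - S h
      = \<epsilon> *\<^sub>R ((\<Sum>b\<in>B. representation B h b *\<^sub>R G b) - D h)"
    using assms(5) unfolding D_def by (simp add: scaleR_diff_right)
  then show ?thesis
    using norm_representation_extension_diff_le[OF assms(1-3) \<open>linear D\<close>, of G] assms(5)
    by (simp add: D_def mult_left_mono)
qed

lemma subspace_finite_basis:
  assumes "subspace V" "finite B" "span B = V"
  obtains B' where "finite B'" "independent B'" "span B' = V"
proof -
  obtain B' where "B' \<subseteq> B" "independent B'" "B \<subseteq> span B'"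
    using maximal_independent_subset[of B] by blast
  moreover have "span B' = V"
    using span_mono[OF \<open>B' \<subseteq> B\<close>] span_minimal[OF \<open>B \<subseteq> span B'\<close> subspace_span] assms(3)
    by blast
  ultimately show thesis using assms(2) finite_subset that by blast
qed

section \<open>Markov chains on a finite state space\<close>

definition kernel_op :: "'l set \<Rightarrow> ('l \<Rightarrow> 'l \<Rightarrow> real) \<Rightarrow> ('l \<Rightarrow> real) \<Rightarrow> 'l \<Rightarrow> real" where
  "kernel_op S Q g l = (\<Sum>y\<in>S. Q l y * g y)"

definition path_weight :: "('l \<Rightarrow> real) \<Rightarrow> ('l \<Rightarrow> 'l \<Rightarrow> real) \<Rightarrow> nat \<Rightarrow> (nat \<Rightarrow> 'l) \<Rightarrow> real" where
  "path_weight \<mu> Q K x = \<mu> (x 0) * (\<Prod>i<K. Q (x i) (x (Suc i)))"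

lemma sum_paths_Suc:
  fixes G :: "(nat \<Rightarrow> 'l) \<Rightarrow> real"
  assumes S: "finite S"
    and G: "\<And>x y. (\<And>i. i \<le> K \<Longrightarrow> x i = y i) \<Longrightarrow> G x = G y"
  shows "(\<Sum>x\<in>PiE {..Suc K} (\<lambda>_. S). G x * h (x (Suc K)) * path_weight \<mu> Q (Suc K) x)
       = (\<Sum>x\<in>PiE {..K} (\<lambda>_. S). G x * kernel_op S Q h (x K) * path_weight \<mu> Q K x)"
proof -
  let ?ext = "\<lambda>(y, x). x(Suc K := y)"
  have inj: "inj_on ?ext (S \<times> PiE {..K} (\<lambda>_. S))"
  proof (rule inj_onI, clarify)
    fix y x y' x'
    assume x: "x \<in> PiE {..K} (\<lambda>_. S)" and x': "x' \<in> PiE {..K} (\<lambda>_. S)"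
      and eq: "x(Suc K := y) = x'(Suc K := y')"
    have "x i = x' i" for i
      using fun_cong[OF eq, of i] x x' by (cases "i = Suc K") (auto simp: PiE_def extensional_def)
    then show "y = y' \<and> x = x'" using fun_cong[OF eq, of "Suc K"] by auto
  qed
  have extend: "G (x(Suc K := y)) * h y * path_weight \<mu> Q (Suc K) (x(Suc K := y))
      = G x * h y * (path_weight \<mu> Q K x * Q (x K) y)" for x y
  proof -
    have "G (x(Suc K := y)) = G x" by (rule G) auto
    moreover have "(\<Prod>i<K. Q ((x(Suc K := y)) i) ((x(Suc K := y)) (Suc i)))
        = (\<Prod>i<K. Q (x i) (x (Suc i)))"
      by (rule prod.cong) auto
    ultimately show ?thesis unfolding path_weight_def by (simp add: mult_ac)
  qed
  have "(\<Sum>x\<in>PiE {..Suc K} (\<lambda>_. S). G x * h (x (Suc K)) * path_weight \<mu> Q (Suc K) x)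
      = (\<Sum>p\<in>S \<times> PiE {..K} (\<lambda>_. S).
           (\<lambda>x. G x * h (x (Suc K)) * path_weight \<mu> Q (Suc K) x) (?ext p))"
    unfolding atMost_Suc PiE_insert_eq using inj by (rule sum.reindex[unfolded comp_def])
  also have "\<dots> = (\<Sum>(y, x)\<in>S \<times> PiE {..K} (\<lambda>_. S). G x * h y * (path_weight \<mu> Q K x * Q (x K) y))"
    by (intro sum.cong refl) (simp add: case_prod_unfold extend)
  also have "\<dots> = (\<Sum>x\<in>PiE {..K} (\<lambda>_. S). \<Sum>y\<in>S. G x * h y * (path_weight \<mu> Q K x * Q (x K) y))"
    by (simp only: sum.cartesian_product[symmetric] sum.swap[of _ S])
  also have "\<dots> = (\<Sum>x\<in>PiE {..K} (\<lambda>_. S). G x * kernel_op S Q h (x K) * path_weight \<mu> Q K x)"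
    by (simp add: kernel_op_def sum_distrib_left sum_distrib_right mult_ac)
  finally show ?thesis .
qed

lemma sum_paths_add:
  fixes G :: "(nat \<Rightarrow> 'l) \<Rightarrow> real"
  assumes S: "finite S"
    and G: "\<And>x y. (\<And>i. i \<le> a \<Longrightarrow> x i = y i) \<Longrightarrow> G x = G y"
  shows "(\<Sum>x\<in>PiE {..a + d} (\<lambda>_. S). G x * h (x (a + d)) * path_weight \<mu> Q (a + d) x)
       = (\<Sum>x\<in>PiE {..a} (\<lambda>_. S). G x * (kernel_op S Q ^^ d) h (x a) * path_weight \<mu> Q a x)"
proof (induction d arbitrary: h)
  case (Suc d)
  have "G x = G y" if "\<And>i. i \<le> a + d \<Longrightarrow> x i = y i" for x y
    using that by (intro G) simp
  then have "(\<Sum>x\<in>PiE {..Suc (a + d)} (\<lambda>_. S). G x * h (x (Suc (a + d))) * path_weight \<mu> Q (Suc (a + d)) x)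
      = (\<Sum>x\<in>PiE {..a + d} (\<lambda>_. S). G x * kernel_op S Q h (x (a + d)) * path_weight \<mu> Q (a + d) x)"
    by (rule sum_paths_Suc[OF S])
  also have "\<dots> = (\<Sum>x\<in>PiE {..a} (\<lambda>_. S). G x * (kernel_op S Q ^^ Suc d) h (x a) * path_weight \<mu> Q a x)"
    unfolding Suc.IH funpow_Suc_right o_apply ..
  finally show ?case by (simp only: add_Suc_right)
qed simp

lemma markov_chain_integral_eq_sum_paths:
  fixes G :: "(nat \<Rightarrow> 'l) \<Rightarrow> real"
  assumes chain: "markov_chain Om Y S \<mu> Q" and S: "finite S"
    and G: "\<And>x y. (\<And>i. i \<le> K \<Longrightarrow> x i = y i) \<Longrightarrow> G x = G y"
  shows "(\<integral>w. G (\<lambda>i. Y i w) \<partial>Om) = (\<Sum>x\<in>PiE {..K} (\<lambda>_. S). G x * path_weight \<mu> Q K x)"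
proof -
  have "prob_space Om" and meas: "\<And>k. Y k \<in> measurable Om (count_space UNIV)"
    and inS: "\<And>k w. w \<in> space Om \<Longrightarrow> Y k w \<in> S"
    and law: "\<And>x. (\<forall>i\<le>K. x i \<in> S) \<Longrightarrow>
        measure Om {w\<in>space Om. \<forall>i\<le>K. Y i w = x i} = path_weight \<mu> Q K x"
    using chain unfolding markov_chain_def path_weight_def by auto
  interpret prob_space Om by fact
  define E where "E x = {w\<in>space Om. \<forall>i\<le>K. Y i w = x i}" for x :: "nat \<Rightarrow> 'l"
  have E: "E x \<in> sets Om" for x
  proof -
    have "E x = (\<Inter>i\<in>{..K}. Y i -` {x i} \<inter> space Om)" unfolding E_def by auto
    also have "\<dots> \<in> sets Om"
      using meas by (intro sets.finite_INT) (auto simp: measurable_def)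
    finally show ?thesis .
  qed
  let ?P = "PiE {..K} (\<lambda>_. S)"
  have "finite ?P" using S by (simp add: finite_PiE)
  have indicators: "G (\<lambda>i. Y i w) = (\<Sum>x\<in>?P. G x * indicator (E x) w)" if w: "w \<in> space Om" for w
  proof -
    define x0 where "x0 = restrict (\<lambda>i. Y i w) {..K}"
    have "x0 \<in> ?P" unfolding x0_def using inS[OF w] by auto
    have "w \<in> E x \<longleftrightarrow> x = x0" if "x \<in> ?P" for x
      using that w unfolding E_def x0_def by (auto simp: PiE_def extensional_def fun_eq_iff)
    then have "(\<Sum>x\<in>?P. G x * indicator (E x) w) = (\<Sum>x\<in>?P. if x = x0 then G x else 0)"
      by (intro sum.cong) auto
    also have "\<dots> = G x0" using \<open>x0 \<in> ?P\<close> \<open>finite ?P\<close> by (simp only: sum.delta if_P)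
    also have "\<dots> = G (\<lambda>i. Y i w)" by (rule G) (simp add: x0_def)
    finally show ?thesis by simp
  qed
  have "(\<integral>w. G (\<lambda>i. Y i w) \<partial>Om) = (\<integral>w. (\<Sum>x\<in>?P. G x * indicator (E x) w) \<partial>Om)"
    by (rule Bochner_Integration.integral_cong) (auto simp: indicators)
  also have "\<dots> = (\<Sum>x\<in>?P. G x * measure Om (E x))"
    using E by (subst Bochner_Integration.integral_sum)
      (auto simp: integrable_indicator_iff sets.Int_space_eq2 less_top[symmetric])
  also have "\<dots> = (\<Sum>x\<in>?P. G x * path_weight \<mu> Q K x)"
    unfolding E_def by (intro sum.cong refl) (simp add: law PiE_iff)
  finally show ?thesis .
qed

lemma markov_chain_integral_shift:
  fixes G :: "(nat \<Rightarrow> 'l) \<Rightarrow> real"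
  assumes chain: "markov_chain Om Y S \<mu> Q" and S: "finite S" and "a \<le> b"
    and G: "\<And>x y. (\<And>i. i \<le> a \<Longrightarrow> x i = y i) \<Longrightarrow> G x = G y"
  shows "(\<integral>w. G (\<lambda>i. Y i w) * h (Y b w) \<partial>Om)
       = (\<integral>w. G (\<lambda>i. Y i w) * (kernel_op S Q ^^ (b - a)) h (Y a w) \<partial>Om)"
proof -
  have "G x * h (x b) = G y * h (y b)" if "\<And>i. i \<le> b \<Longrightarrow> x i = y i" for x y
    using that \<open>a \<le> b\<close> G[of x y] by simp
  then have "(\<integral>w. G (\<lambda>i. Y i w) * h (Y b w) \<partial>Om)
      = (\<Sum>x\<in>PiE {..b} (\<lambda>_. S). G x * h (x b) * path_weight \<mu> Q b x)"
    by (rule markov_chain_integral_eq_sum_paths[OF chain S])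
  also have "\<dots> = (\<Sum>x\<in>PiE {..a + (b - a)} (\<lambda>_. S). G x * h (x (a + (b - a))) * path_weight \<mu> Q (a + (b - a)) x)"
    using \<open>a \<le> b\<close> by (simp only: le_add_diff_inverse)
  also have "\<dots> = (\<Sum>x\<in>PiE {..a} (\<lambda>_. S). G x * (kernel_op S Q ^^ (b - a)) h (x a) * path_weight \<mu> Q a x)"
    by (rule sum_paths_add[OF S G])
  also have "\<dots> = (\<integral>w. G (\<lambda>i. Y i w) * (kernel_op S Q ^^ (b - a)) h (Y a w) \<partial>Om)"
  proof (rule markov_chain_integral_eq_sum_paths[OF chain S, symmetric])
    fix x y :: "nat \<Rightarrow> 'l" assume "\<And>i. i \<le> a \<Longrightarrow> x i = y i"
    then show "G x * (kernel_op S Q ^^ (b - a)) h (x a) = G y * (kernel_op S Q ^^ (b - a)) h (y a)"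
      using G[of x y] by simp
  qed
  finally show ?thesis .
qed

lemma markov_chain_integral_single:
  assumes chain: "markov_chain Om Y S \<mu> Q" and S: "finite S"
  shows "(\<integral>w. h (Y b w) \<partial>Om) = (\<Sum>l\<in>S. \<mu> l * (kernel_op S Q ^^ b) h l)"
proof -
  have "(\<integral>w. h (Y b w) \<partial>Om) = (\<integral>w. (kernel_op S Q ^^ b) h (Y 0 w) \<partial>Om)"
    using markov_chain_integral_shift[OF chain S, where a=0 and b=b and G="\<lambda>_. 1" and h=h] by simp
  also have "\<dots> = (\<Sum>x\<in>PiE {..0} (\<lambda>_. S). (kernel_op S Q ^^ b) h (x 0) * path_weight \<mu> Q 0 x)"
    by (rule markov_chain_integral_eq_sum_paths[OF chain S]) simp
  also have "\<dots> = (\<Sum>l\<in>S. \<mu> l * (kernel_op S Q ^^ b) h l)"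
  proof (rule sum.reindex_bij_witness[of _ "\<lambda>l. \<lambda>i\<in>{..0}. l" "\<lambda>x. x 0"])
    fix x assume "x \<in> PiE {..0::nat} (\<lambda>_. S)"
    then show "(\<lambda>i\<in>{..0}. x 0) = x" by (intro ext) (auto simp: PiE_def extensional_def)
  qed (auto simp: path_weight_def)
  finally show ?thesis .
qed

lemma markov_chain_integral_prod_merge:
  fixes g :: "nat \<Rightarrow> 'l \<Rightarrow> real" and Y :: "nat \<Rightarrow> 'v \<Rightarrow> 'l"
  assumes chain: "markov_chain Om Y S \<mu> Q" and S: "finite S"
    and mono: "\<And>i. i \<le> k \<Longrightarrow> \<kappa> i \<le> \<kappa> k" "\<kappa> k \<le> \<kappa> (Suc k)"
  shows "(\<integral>w. (\<Prod>i<Suc (Suc k). g i (Y (\<kappa> i) w)) \<partial>Om)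
       = (\<integral>w. (\<Prod>i<Suc k. (g(k := \<lambda>l. g k l * (kernel_op S Q ^^ (\<kappa> (Suc k) - \<kappa> k)) (g (Suc k)) l))
                          i (Y (\<kappa> i) w)) \<partial>Om)" (is "_ = ?rhs")
proof -
  define G where "G x = (\<Prod>i<Suc k. g i (x (\<kappa> i)))" for x :: "nat \<Rightarrow> 'l"
  have G: "G x = G y" if "\<And>i. i \<le> \<kappa> k \<Longrightarrow> x i = y i" for x y
    unfolding G_def using that mono(1) by (intro prod.cong) auto
  have "(\<integral>w. (\<Prod>i<Suc (Suc k). g i (Y (\<kappa> i) w)) \<partial>Om)
      = (\<integral>w. G (\<lambda>i. Y i w) * g (Suc k) (Y (\<kappa> (Suc k)) w) \<partial>Om)"
    by (simp add: G_def)
  also have "\<dots> = (\<integral>w. G (\<lambda>i. Y i w) * (kernel_op S Q ^^ (\<kappa> (Suc k) - \<kappa> k)) (g (Suc k)) (Y (\<kappa> k) w) \<partial>Om)"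
    by (rule markov_chain_integral_shift[OF chain S mono(2) G])
  also have "\<dots> = ?rhs" by (simp add: G_def mult_ac)
  finally show ?thesis .
qed

definition stochastic_matrix :: "'l set \<Rightarrow> ('l \<Rightarrow> 'l \<Rightarrow> real) \<Rightarrow> bool" where
  "stochastic_matrix S Q \<longleftrightarrow> (\<forall>l\<in>S. (\<forall>y\<in>S. Q l y \<ge> 0) \<and> (\<Sum>y\<in>S. Q l y) = 1)"

lemma kernel_op_cong: "(\<And>y. y \<in> S \<Longrightarrow> a y = b y) \<Longrightarrow> kernel_op S Q a l = kernel_op S Q b l"
  unfolding kernel_op_def by simp

lemma kernel_op_sum:
  "kernel_op S Q (\<lambda>y. \<Sum>b\<in>B. c b * g b y) l = (\<Sum>b\<in>B. c b * kernel_op S Q (g b) l)"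
  unfolding kernel_op_def by (simp add: sum_distrib_left sum.swap[of _ B] mult_ac)

lemma kernel_op_dist_le:
  assumes "stochastic_matrix S Q" "l \<in> S" "\<And>y. y \<in> S \<Longrightarrow> \<bar>a y - b y\<bar> \<le> c"
  shows "\<bar>kernel_op S Q a l - kernel_op S Q b l\<bar> \<le> c"
proof -
  have Q: "\<And>y. y \<in> S \<Longrightarrow> Q l y \<ge> 0" "(\<Sum>y\<in>S. Q l y) = 1"
    using assms(1,2) unfolding stochastic_matrix_def by auto
  have "\<bar>kernel_op S Q a l - kernel_op S Q b l\<bar> = \<bar>\<Sum>y\<in>S. Q l y * (a y - b y)\<bar>"
    unfolding kernel_op_def by (simp add: sum_subtractf right_diff_distrib)
  also have "\<dots> \<le> (\<Sum>y\<in>S. Q l y * c)"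
    using Q(1) assms(3)
    by (intro order_trans[OF sum_abs] sum_mono) (simp add: abs_mult mult_left_mono)
  also have "\<dots> = c" using Q(2) by (simp add: sum_distrib_right[symmetric])
  finally show ?thesis .
qed

lemma kernel_op_iterate_dist_le:
  assumes "stochastic_matrix S Q" "\<And>y. y \<in> S \<Longrightarrow> \<bar>a y - b y\<bar> \<le> c" "l \<in> S"
  shows "\<bar>(kernel_op S Q ^^ d) a l - (kernel_op S Q ^^ d) b l\<bar> \<le> c"
  using assms(3)
proof (induction d arbitrary: l)
  case (Suc d)
  then show ?case using kernel_op_dist_le[OF assms(1)] by simp
qed (use assms(2) in simp)

lemma Tapp_eq_kernel_op: "Tapp deg pd M n = kernel_op (level deg n) (Tmat deg pd M n)"
  by (intro ext) (simp add: Tapp_def kernel_op_def)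

text \<open>The row sums of \<open>T\<^sub>n\<close> are \<open>1\<close> by the normalisation of \<open>p\<^sup>\<down>\<close> on level \<open>n + 1\<close> and
  the coherence of \<open>M\<^sub>n\<^sub>+\<^sub>1\<close> with \<open>M\<^sub>n\<close>.\<close>

lemma coherent_setting_Tmat_stochastic:
  assumes "coherent_setting deg pd M"
  shows "stochastic_matrix (level deg n) (Tmat deg pd M n)"
  unfolding stochastic_matrix_def
proof (intro ballI conjI)
  fix l assume l: "l \<in> level deg n"
  have Mpos: "\<And>n l. l \<in> level deg n \<Longrightarrow> M n l > 0" and pd_nonneg: "\<And>a b. pd a b \<ge> 0"
    and pd_sum: "\<And>lam. deg lam \<ge> 1 \<Longrightarrow> (\<Sum>mu\<in>level deg (deg lam - 1). pd lam mu) = 1"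
    and coherent: "\<And>n mu. n \<ge> 1 \<Longrightarrow> mu \<in> level deg (n - 1) \<Longrightarrow>
        (\<Sum>lam\<in>level deg n. M n lam * pd lam mu) = M (n - 1) mu"
    using assms unfolding coherent_setting_def by auto
  have deg_l: "deg l = n" using l by (simp add: level_def)
  show "Tmat deg pd M n l l' \<ge> 0" for l'
    unfolding Tmat_def pup_def deg_l using Mpos[OF l] Mpos pd_nonneg
    by (intro sum_nonneg mult_nonneg_nonneg divide_nonneg_pos) (auto simp: less_imp_le)
  have "(\<Sum>l'\<in>level deg n. Tmat deg pd M n l l')
      = (\<Sum>nu\<in>level deg (Suc n). pup deg pd M l nu * (\<Sum>l'\<in>level deg n. pd nu l'))"
    unfolding Tmat_def by (simp add: sum_distrib_left sum.swap[of _ "level deg n"])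
  also have "\<dots> = (\<Sum>nu\<in>level deg (Suc n). pup deg pd M l nu)"
  proof (intro sum.cong refl)
    fix nu assume "nu \<in> level deg (Suc n)"
    then have "(\<Sum>l'\<in>level deg n. pd nu l') = 1" using pd_sum[of nu] by (simp add: level_def)
    then show "pup deg pd M l nu * (\<Sum>l'\<in>level deg n. pd nu l') = pup deg pd M l nu" by simp
  qed
  also have "\<dots> = (\<Sum>nu\<in>level deg (Suc n). M (Suc n) nu * pd nu l) / M n l"
    unfolding pup_def deg_l by (simp add: sum_divide_distrib)
  also have "\<dots> = 1"
    using coherent[of "Suc n" l] l Mpos[OF l] by simp
  finally show "(\<Sum>l'\<in>level deg n. Tmat deg pd M n l l') = 1" .
qed

section \<open>Markov semigroups on bounded continuous functions\<close>

lemma bcontfun_sum_apply: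
  fixes g :: "'b \<Rightarrow> ('a::topological_space \<Rightarrow>\<^sub>C real)"
  shows "apply_bcontfun (\<Sum>b\<in>B. c b *\<^sub>R g b) x = (\<Sum>b\<in>B. c b * apply_bcontfun (g b) x)"
  by (induction B rule: infinite_finite_induct) simp_all

lemma abs_bcontfun_le: "\<bar>apply_bcontfun f x\<bar> \<le> norm (f :: 'a::topological_space \<Rightarrow>\<^sub>C real)"
  using norm_bounded[of f x] by simp

definition bcontfun_mult :: "('a::topological_space \<Rightarrow>\<^sub>C real) \<Rightarrow> ('a \<Rightarrow>\<^sub>C real) \<Rightarrow> ('a \<Rightarrow>\<^sub>C real)" where
  "bcontfun_mult f g = Bcontfun (\<lambda>x. f x * g x)"

lemma bcontfun_mult_apply [simp]: "apply_bcontfun (bcontfun_mult f g) x = f x * g x"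
proof -
  have "(\<lambda>x. f x * g x) \<in> bcontfun"
  proof (rule bcontfun_normI)
    show "continuous_on UNIV (\<lambda>x. f x * g x)" by (intro continuous_intros) auto
    show "norm (f x * g x) \<le> norm f * norm g" for x
      unfolding norm_mult using norm_bounded[of f x] norm_bounded[of g x] by (intro mult_mono) auto
  qed
  then show ?thesis unfolding bcontfun_mult_def by (simp add: Bcontfun_inverse)
qed

lemma bcontfun_borel_measurable: "apply_bcontfun f \<in> borel_measurable borel"
  by (rule borel_measurable_continuous_onI) simp

lemma markov_semigroup_linear: "markov_semigroup T \<Longrightarrow> t \<ge> 0 \<Longrightarrow> linear (T t)"
  unfolding markov_semigroup_def by (auto intro: bounded_linear.linear)

text \<open>Positivity and \<open>T t 1 = 1\<close> squeeze \<open>T t f\<close> between \<open>\<plusminus>norm f\<close>.\<close>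

lemma markov_semigroup_norm_le:
  assumes T: "markov_semigroup T" and t: "t \<ge> 0"
  shows "norm (T t f) \<le> norm f"
proof -
  have lin: "linear (T t)" by (rule markov_semigroup_linear[OF T t])
  have pos: "\<And>g. (\<forall>x. apply_bcontfun g x \<ge> 0) \<Longrightarrow> (\<forall>x. apply_bcontfun (T t g) x \<ge> 0)"
    using T t unfolding markov_semigroup_def by auto
  define c where "c = norm f"
  have const: "T t (const_bcontfun c) = const_bcontfun c"
  proof -
    have "const_bcontfun c = c *\<^sub>R (const_bcontfun 1 :: 'a \<Rightarrow>\<^sub>C real)"
      by (rule bcontfun_eqI) simp
    then show ?thesis using T t unfolding markov_semigroup_def by (simp add: linear_scale[OF lin])
  qed
  have f: "\<bar>apply_bcontfun f x\<bar> \<le> c" for x using norm_bounded[of f x] unfolding c_def by simp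
  have "0 \<le> c - apply_bcontfun f x" "0 \<le> c + apply_bcontfun f x" for x
    using f[of x] by (auto simp: abs_le_iff)
  then have "\<forall>x. apply_bcontfun (const_bcontfun c - f) x \<ge> 0"
    "\<forall>x. apply_bcontfun (const_bcontfun c + f) x \<ge> 0"
    by simp_all
  then have "\<forall>x. apply_bcontfun (T t (const_bcontfun c - f)) x \<ge> 0"
    "\<forall>x. apply_bcontfun (T t (const_bcontfun c + f)) x \<ge> 0"
    using pos by blast+
  then have up: "apply_bcontfun (T t f) x \<le> c" and low: "0 \<le> c + apply_bcontfun (T t f) x" for x
    by (simp_all add: linear_diff[OF lin] linear_add[OF lin] const)
  have "\<bar>apply_bcontfun (T t f) x\<bar> \<le> c" for x using up[of x] low[of x] by (simp add: abs_le_iff)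
  then show ?thesis unfolding c_def by (intro norm_bound) simp
qed

lemma markov_semigroup_norm_diff_le:
  "markov_semigroup T \<Longrightarrow> t \<ge> 0 \<Longrightarrow> norm (T t f - T t g) \<le> norm (f - g)"
  using markov_semigroup_norm_le[of T t "f - g"] by (simp add: linear_diff markov_semigroup_linear)

lemma markov_semigroup_telescope:
  assumes T: "markov_semigroup T" and s: "s \<ge> 0"
    and step: "\<And>j. j < d \<Longrightarrow> norm (x (Suc j) - T s (x j)) \<le> c"
  shows "norm (x d - T (real d * s) (x 0)) \<le> real d * c"
  using step
proof (induction d)
  case 0
  then show ?case using T unfolding markov_semigroup_def by simp
next
  case (Suc d)
  have "T (s + real d * s) (x 0) = T s (T (real d * s) (x 0))"
    using T s unfolding markov_semigroup_def by simp
  then have "norm (x (Suc d) - T (real (Suc d) * s) (x 0))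
      = norm ((x (Suc d) - T s (x d)) + (T s (x d) - T s (T (real d * s) (x 0))))"
    by (simp add: algebra_simps)
  also have "\<dots> \<le> norm (x (Suc d) - T s (x d)) + norm (T s (x d) - T s (T (real d * s) (x 0)))"
    by (rule norm_triangle_ineq)
  also have "\<dots> \<le> c + real d * c"
    using Suc markov_semigroup_norm_diff_le[OF T s, of "x d" "T (real d * s) (x 0)"]
    by (intro add_mono) auto
  finally show ?case by (simp add: algebra_simps)
qed

lemma le_exp_of_linear_growth:
  fixes u :: "nat \<Rightarrow> real"
  assumes "\<And>j. u (Suc j) \<le> (1 + a) * u j" "a \<ge> 0" "u 0 \<ge> 0"
  shows "u j \<le> exp (a * j) * u 0"
proof -
  have growth: "u j \<le> (1 + a) ^ j * u 0"
  proof (induction j)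
    case (Suc j)
    have "u (Suc j) \<le> (1 + a) * ((1 + a) ^ j * u 0)"
      using assms(1)[of j] mult_left_mono[OF Suc, of "1 + a"] assms(2) by linarith
    then show ?case by (simp add: mult.assoc)
  qed simp
  moreover have "(1 + a) ^ j \<le> exp a ^ j"
    using assms(2) by (intro power_mono) (auto simp: exp_ge_add_one_self add.commute)
  ultimately have "(1 + a) ^ j * u 0 \<le> exp (a * j) * u 0"
    using assms(3) by (intro mult_right_mono) (simp_all add: exp_of_nat_mult[symmetric] mult.commute)
  with growth show ?thesis by linarith
qed

lemma markov_semigroup_tendsto:
  assumes "markov_semigroup T" "(s \<longlongrightarrow> t) F" "t \<ge> 0" "\<forall>\<^sub>F x in F. s x \<ge> 0"
  shows "((\<lambda>x. T (s x) f) \<longlongrightarrow> T t f) F"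
proof -
  have "continuous_on {0..} (\<lambda>t. T t f)" using assms(1) unfolding markov_semigroup_def by simp
  from continuous_on_tendsto_compose[OF this assms(2)] show ?thesis
    using assms(3,4) by simp
qed

text \<open>Stability of this Euler-type scheme comes for free from the contractivity of \<open>T\<close>:
  the iterates grow at most geometrically, and the one-step errors add up.\<close>

lemma markov_semigroup_iterates_norm_diff_le:
  fixes R :: "('a::topological_space \<Rightarrow>\<^sub>C real) \<Rightarrow> ('a \<Rightarrow>\<^sub>C real)"
  assumes T: "markov_semigroup T" and "s \<ge> 0" "a \<ge> 0" "f \<in> V"
    and step: "\<And>h. h \<in> V \<Longrightarrow> R h \<in> V \<and> norm (R h - T s h) \<le> a * norm h"
  shows "norm ((R ^^ d) f - T (real d * s) f) \<le> real d * a * exp (real d * a) * norm f"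
proof -
  define x where "x j = (R ^^ j) f" for j
  have xV: "x j \<in> V" for j
    by (induction j) (use \<open>f \<in> V\<close> step in \<open>auto simp: x_def\<close>)
  have err: "norm (x (Suc j) - T s (x j)) \<le> a * norm (x j)" for j
    using step[OF xV[of j]] by (simp add: x_def)
  have "norm (x (Suc j)) \<le> (1 + a) * norm (x j)" for j
    using norm_triangle_ineq2[of "x (Suc j)" "T s (x j)"] err[of j]
      markov_semigroup_norm_le[OF T \<open>s \<ge> 0\<close>, of "x j"]
    by (simp add: algebra_simps)
  then have growth: "norm (x j) \<le> exp (a * j) * norm f" for j
    using le_exp_of_linear_growth[of "\<lambda>j. norm (x j)"] \<open>a \<ge> 0\<close> by (simp add: x_def)
  have "norm (x (Suc j) - T s (x j)) \<le> a * (exp (real d * a) * norm f)" if "j < d" for j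
  proof -
    have "exp (a * j) \<le> exp (real d * a)"
      using that \<open>a \<ge> 0\<close> by (simp add: mult.commute[of _ a] mult_left_mono)
    then have "norm (x j) \<le> exp (real d * a) * norm f"
      using growth[of j] mult_right_mono[of _ _ "norm f"] by fastforce
    then show ?thesis using err[of j] mult_left_mono[OF _ \<open>a \<ge> 0\<close>] by fastforce
  qed
  then have "norm (x d - T (real d * s) (x 0)) \<le> real d * (a * (exp (real d * a) * norm f))"
    by (rule markov_semigroup_telescope[OF T \<open>s \<ge> 0\<close>])
  then show ?thesis by (simp add: x_def mult_ac)
qed

lemma markov_semigroup_iterates_tendsto:
  fixes R :: "nat \<Rightarrow> ('a::topological_space \<Rightarrow>\<^sub>C real) \<Rightarrow> ('a \<Rightarrow>\<^sub>C real)"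
  assumes T: "markov_semigroup T"
    and \<epsilon>: "\<And>n. \<epsilon> n > 0" and r: "r \<longlonglongrightarrow> 0" and d: "(\<lambda>n. real (d n) * \<epsilon> n) \<longlonglongrightarrow> t"
    and "t \<ge> 0" and "f \<in> V"
    and step: "\<forall>\<^sub>F n in sequentially. \<forall>h\<in>V. R n h \<in> V \<and>
                 norm (R n h - T (\<epsilon> n) h) \<le> \<epsilon> n * r n * norm h"
  shows "(\<lambda>n. (R n ^^ d n) f) \<longlonglongrightarrow> T t f"
proof -
  define a where "a n = \<epsilon> n * \<bar>r n\<bar>" for n
  define bound where "bound n = real (d n) * a n * exp (real (d n) * a n) * norm f
      + norm (T (real (d n) * \<epsilon> n) f - T t f)" for n
  have "(\<lambda>n. real (d n) * a n) \<longlonglongrightarrow> t * 0"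
    unfolding a_def mult.assoc[symmetric] using r by (intro tendsto_mult d tendsto_rabs_zero)
  moreover have "(\<lambda>n. T (real (d n) * \<epsilon> n) f) \<longlonglongrightarrow> T t f"
    using \<epsilon> \<open>t \<ge> 0\<close>
    by (intro markov_semigroup_tendsto[OF T d] always_eventually allI mult_nonneg_nonneg)
      (auto intro: less_imp_le)
  then have "(\<lambda>n. norm (T (real (d n) * \<epsilon> n) f - T t f)) \<longlonglongrightarrow> 0"
    by (simp add: tendsto_norm_zero_iff LIM_zero_iff)
  ultimately have "bound \<longlonglongrightarrow> 0 * exp 0 * norm f + 0"
    unfolding bound_def by (intro tendsto_add tendsto_mult tendsto_exp tendsto_const) simp_all
  then have bound: "bound \<longlonglongrightarrow> 0" by simp
  have "\<forall>\<^sub>F n in sequentially. norm ((R n ^^ d n) f - T t f) \<le> bound n"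
    using step
  proof eventually_elim
    case (elim n)
    have "\<epsilon> n * r n * norm h \<le> a n * norm h" for h
      unfolding a_def using \<epsilon>[of n] by (intro mult_right_mono) auto
    with elim have "norm ((R n ^^ d n) f - T (real (d n) * \<epsilon> n) f)
        \<le> real (d n) * a n * exp (real (d n) * a n) * norm f"
      using \<epsilon>[of n] \<open>f \<in> V\<close> unfolding a_def
      by (intro markov_semigroup_iterates_norm_diff_le[OF T, where V=V]) (auto intro: order_trans)
    then show ?case
      using norm_triangle_ineq[of "(R n ^^ d n) f - T (real (d n) * \<epsilon> n) f" "T (real (d n) * \<epsilon> n) f - T t f"]
      by (simp add: bound_def)
  qed
  then have "(\<lambda>n. (R n ^^ d n) f - T t f) \<longlonglongrightarrow> 0"
    using bound by (rule Lim_null_comparison)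
  then show ?thesis by (simp add: LIM_zero_iff)
qed

lemma real_floor_divide_times_tendsto:
  assumes \<epsilon>: "\<And>n. \<epsilon> n > 0" "\<epsilon> \<longlonglongrightarrow> 0" and "(t::real) \<ge> 0"
  shows "(\<lambda>n. real (nat \<lfloor>t / \<epsilon> n\<rfloor>) * \<epsilon> n) \<longlonglongrightarrow> t"
proof (rule tendsto_sandwich[of "\<lambda>n. t - \<epsilon> n" _ sequentially "\<lambda>n. t"])
  have floor: "real (nat \<lfloor>t / \<epsilon> n\<rfloor>) = of_int \<lfloor>t / \<epsilon> n\<rfloor>" for n
    using \<open>t \<ge> 0\<close> \<epsilon>(1)[of n] by simp
  have "t - \<epsilon> n \<le> real (nat \<lfloor>t / \<epsilon> n\<rfloor>) * \<epsilon> n \<and> real (nat \<lfloor>t / \<epsilon> n\<rfloor>) * \<epsilon> n \<le> t" for n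
  proof -
    have "(t / \<epsilon> n - 1) * \<epsilon> n \<le> of_int \<lfloor>t / \<epsilon> n\<rfloor> * \<epsilon> n"
      "of_int \<lfloor>t / \<epsilon> n\<rfloor> * \<epsilon> n \<le> t / \<epsilon> n * \<epsilon> n"
      using \<epsilon>(1)[of n] by (intro mult_right_mono; linarith)+
    then show ?thesis using \<epsilon>(1)[of n] by (simp add: floor left_diff_distrib)
  qed
  then show "\<forall>\<^sub>F n in sequentially. t - \<epsilon> n \<le> real (nat \<lfloor>t / \<epsilon> n\<rfloor>) * \<epsilon> n"
    "\<forall>\<^sub>F n in sequentially. real (nat \<lfloor>t / \<epsilon> n\<rfloor>) * \<epsilon> n \<le> t"
    by simp_all
  show "(\<lambda>n. t - \<epsilon> n) \<longlonglongrightarrow> t" using tendsto_diff[OF tendsto_const \<epsilon>(2), of t] by simp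
qed simp

lemma real_floor_divide_diff_times_tendsto:
  assumes \<epsilon>: "\<And>n. \<epsilon> n > 0" "\<epsilon> \<longlonglongrightarrow> 0" and "0 \<le> s" "s \<le> (t::real)"
  shows "(\<lambda>n. real (nat \<lfloor>t / \<epsilon> n\<rfloor> - nat \<lfloor>s / \<epsilon> n\<rfloor>) * \<epsilon> n) \<longlonglongrightarrow> t - s"
proof -
  have "nat \<lfloor>s / \<epsilon> n\<rfloor> \<le> nat \<lfloor>t / \<epsilon> n\<rfloor>" for n
    using assms(4) \<epsilon>(1)[of n] by (intro nat_mono floor_mono divide_right_mono) auto
  then have "real (nat \<lfloor>t / \<epsilon> n\<rfloor> - nat \<lfloor>s / \<epsilon> n\<rfloor>) * \<epsilon> n
      = real (nat \<lfloor>t / \<epsilon> n\<rfloor>) * \<epsilon> n - real (nat \<lfloor>s / \<epsilon> n\<rfloor>) * \<epsilon> n" for n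
    by (simp add: of_nat_diff left_diff_distrib)
  moreover have "(\<lambda>n. real (nat \<lfloor>t / \<epsilon> n\<rfloor>) * \<epsilon> n - real (nat \<lfloor>s / \<epsilon> n\<rfloor>) * \<epsilon> n) \<longlonglongrightarrow> t - s"
    using assms by (intro tendsto_diff real_floor_divide_times_tendsto) auto
  ultimately show ?thesis by simp
qed

lemma bounded_lift_Suc_mono_le:
  fixes t :: "nat \<Rightarrow> real"
  assumes "\<And>i. Suc i < k \<Longrightarrow> t i < t (Suc i)" "i \<le> j" "j < k"
  shows "t i \<le> t j"
  using assms(2,3)
proof (induction j rule: dec_induct)
  case (step j)
  then show ?case using assms(1)[of j] by simp
qed simp

definition uniformly_close :: "(nat \<Rightarrow> 'l set) \<Rightarrow> (nat \<Rightarrow> 'l \<Rightarrow> real) \<Rightarrow> (nat \<Rightarrow> 'l \<Rightarrow> real) \<Rightarrow> bool" where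
  "uniformly_close S g h \<longleftrightarrow> (\<forall>e>0. \<forall>\<^sub>F n in sequentially. \<forall>l\<in>S n. \<bar>g n l - h n l\<bar> \<le> e)"

lemma uniformly_close_refl: "uniformly_close S g g"
  unfolding uniformly_close_def by simp

lemma uniformly_closeI:
  assumes "r \<longlonglongrightarrow> 0" "\<forall>\<^sub>F n in sequentially. \<forall>l\<in>S n. \<bar>g n l - h n l\<bar> \<le> r n"
  shows "uniformly_close S g h"
  unfolding uniformly_close_def
proof (intro allI impI)
  fix e :: real assume "e > 0"
  then have "\<forall>\<^sub>F n in sequentially. \<bar>r n\<bar> < e"
    using assms(1) by (auto simp: tendsto_iff dist_real_def)
  with assms(2) show "\<forall>\<^sub>F n in sequentially. \<forall>l\<in>S n. \<bar>g n l - h n l\<bar> \<le> e"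
    by eventually_elim force
qed

lemma uniformly_close_mult:
  assumes "uniformly_close S g1 h1" "uniformly_close S g2 h2"
    and "\<And>n l. l \<in> S n \<Longrightarrow> \<bar>h1 n l\<bar> \<le> B1" "\<And>n l. l \<in> S n \<Longrightarrow> \<bar>h2 n l\<bar> \<le> B2"
  shows "uniformly_close S (\<lambda>n l. g1 n l * g2 n l) (\<lambda>n l. h1 n l * h2 n l)"
  unfolding uniformly_close_def
proof (intro allI impI)
  fix e :: real assume "e > 0"
  define e' where "e' = min 1 (e / (\<bar>B1\<bar> + \<bar>B2\<bar> + 1))"
  have "e' > 0" "e' \<le> 1" unfolding e'_def using \<open>e > 0\<close> by (auto simp: add_nonneg_pos)
  have "e' \<le> e / (\<bar>B1\<bar> + \<bar>B2\<bar> + 1)" unfolding e'_def by simp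
  then have e': "e' * (\<bar>B1\<bar> + \<bar>B2\<bar> + 1) \<le> e"
    by (simp add: pos_le_divide_eq add_nonneg_pos)
  have "\<forall>\<^sub>F n in sequentially. \<forall>l\<in>S n. \<bar>g1 n l - h1 n l\<bar> \<le> e'"
    "\<forall>\<^sub>F n in sequentially. \<forall>l\<in>S n. \<bar>g2 n l - h2 n l\<bar> \<le> e'"
    using assms(1,2) \<open>e' > 0\<close> unfolding uniformly_close_def by blast+
  then show "\<forall>\<^sub>F n in sequentially. \<forall>l\<in>S n. \<bar>g1 n l * g2 n l - h1 n l * h2 n l\<bar> \<le> e"
  proof eventually_elim
    case (elim n)
    show ?case
    proof
      fix l assume l: "l \<in> S n"
      have "g1 n l * g2 n l - h1 n l * h2 n l = g1 n l * (g2 n l - h2 n l) + (g1 n l - h1 n l) * h2 n l"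
        by (simp add: algebra_simps)
      also have "\<bar>\<dots>\<bar> \<le> \<bar>g1 n l\<bar> * \<bar>g2 n l - h2 n l\<bar> + \<bar>g1 n l - h1 n l\<bar> * \<bar>h2 n l\<bar>"
        by (metis abs_mult abs_triangle_ineq)
      also have "\<dots> \<le> (\<bar>B1\<bar> + 1) * e' + e' * \<bar>B2\<bar>"
      proof (intro add_mono mult_mono)
        show "\<bar>g1 n l\<bar> \<le> \<bar>B1\<bar> + 1" using elim l assms(3)[OF l] \<open>e' \<le> 1\<close> by force
        show "\<bar>h2 n l\<bar> \<le> \<bar>B2\<bar>" using assms(4)[OF l] by simp
      qed (use elim l in auto)
      also have "\<dots> \<le> e" using e' by (simp add: algebra_simps)
      finally show "\<bar>g1 n l * g2 n l - h1 n l * h2 n l\<bar> \<le> e" .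
    qed
  qed
qed

lemma uniformly_close_weighted_sum_tendsto:
  assumes "uniformly_close S g h"
    and w: "\<And>n l. l \<in> S n \<Longrightarrow> w n l \<ge> 0" "\<And>n. (\<Sum>l\<in>S n. w n l) = 1"
    and lim: "(\<lambda>n. \<Sum>l\<in>S n. w n l * h n l) \<longlonglongrightarrow> L"
  shows "(\<lambda>n. \<Sum>l\<in>S n. w n l * g n l) \<longlonglongrightarrow> L"
proof -
  have "(\<lambda>n. \<Sum>l\<in>S n. w n l * (g n l - h n l)) \<longlonglongrightarrow> 0"
    unfolding tendsto_iff dist_real_def
  proof (intro allI impI)
    fix e :: real assume "e > 0"
    then have "e / 2 > 0" by simp
    then have "\<forall>\<^sub>F n in sequentially. \<forall>l\<in>S n. \<bar>g n l - h n l\<bar> \<le> e / 2"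
      using assms(1) unfolding uniformly_close_def by blast
    then show "\<forall>\<^sub>F n in sequentially. \<bar>(\<Sum>l\<in>S n. w n l * (g n l - h n l)) - 0\<bar> < e"
    proof eventually_elim
      case (elim n)
      have "\<bar>\<Sum>l\<in>S n. w n l * (g n l - h n l)\<bar> \<le> (\<Sum>l\<in>S n. w n l * (e / 2))"
      proof (intro order_trans[OF sum_abs] sum_mono)
        fix l assume l: "l \<in> S n"
        then have "\<bar>g n l - h n l\<bar> \<le> e / 2" using elim by auto
        then show "\<bar>w n l * (g n l - h n l)\<bar> \<le> w n l * (e / 2)"
          unfolding abs_mult abs_of_nonneg[OF w(1)[OF l]] by (rule mult_left_mono[OF _ w(1)[OF l]])
      qed
      also have "\<dots> = e / 2" using w(2)[of n] by (simp only: sum_distrib_right[symmetric] mult_1)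
      finally show ?case using \<open>e > 0\<close> by simp
    qed
  qed
  with lim have "(\<lambda>n. (\<Sum>l\<in>S n. w n l * h n l) + (\<Sum>l\<in>S n. w n l * (g n l - h n l))) \<longlonglongrightarrow> L + 0"
    by (rule tendsto_add)
  then show ?thesis by (simp add: algebra_simps sum.distrib[symmetric])
qed

lemma space_nat_filtration [simp]: "space (nat_filtration Om X s) = space Om"
  unfolding nat_filtration_def by (rule space_measure_of_conv)

context
  fixes Om :: "'w measure" and X :: "real \<Rightarrow> 'w \<Rightarrow> 'x::topological_space" and s :: real
  assumes X: "\<And>u. u \<in> {0..s} \<Longrightarrow> X u \<in> measurable Om borel"
begin

lemma sets_nat_filtration:
  "sets (nat_filtration Om X s) = sigma_sets (space Om) (\<Union>u\<in>{0..s}. {X u -` B \<inter> space Om | B. B \<in> sets borel})"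
proof -
  have "(\<Union>u\<in>{0..s}. {X u -` B \<inter> space Om | B. B \<in> sets borel}) \<subseteq> Pow (space Om)" by blast
  then show ?thesis unfolding nat_filtration_def by (rule sets_measure_of)
qed

lemma subalgebra_nat_filtration: "subalgebra Om (nat_filtration Om X s)"
proof -
  have "(\<Union>u\<in>{0..s}. {X u -` B \<inter> space Om | B. B \<in> sets borel}) \<subseteq> sets Om"
    using X measurable_sets by blast
  then show ?thesis
    unfolding subalgebra_def sets_nat_filtration using sets.sigma_sets_subset by simp
qed

lemma measurable_nat_filtration:
  assumes "u \<in> {0..s}"
  shows "X u \<in> measurable (nat_filtration Om X s) borel"
proof (rule measurableI)
  fix B :: "'x set" assume "B \<in> sets borel"
  then have "X u -` B \<inter> space Om \<in> (\<Union>u\<in>{0..s}. {X u -` B \<inter> space Om | B. B \<in> sets borel})"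
    using assms by blast
  then show "X u -` B \<inter> space (nat_filtration Om X s) \<in> sets (nat_filtration Om X s)"
    unfolding sets_nat_filtration by (simp add: sigma_sets.Basic)
qed simp

end

context
  fixes Om :: "'w measure" and X :: "real \<Rightarrow> 'w \<Rightarrow> 'x::topological_space"
    and T :: "real \<Rightarrow> ('x \<Rightarrow>\<^sub>C real) \<Rightarrow> ('x \<Rightarrow>\<^sub>C real)" and P :: "'x measure"
  assumes X: "markov_process Om X T P"
begin

lemma markov_process_prob_space: "prob_space Om"
  using X unfolding markov_process_def by simp

lemma markov_process_measurable: "t \<ge> 0 \<Longrightarrow> X t \<in> measurable Om borel"
  using X unfolding markov_process_def by simp

lemma markov_process_integral_shift:
  fixes f :: "'x \<Rightarrow>\<^sub>C real"
  assumes "0 \<le> s" "0 \<le> t"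
    and Z: "Z \<in> borel_measurable (nat_filtration Om X s)" and Z_bound: "\<And>w. \<bar>Z w\<bar> \<le> C"
  shows "(\<integral>w. Z w * f (X (s + t) w) \<partial>Om) = (\<integral>w. Z w * T t f (X s w) \<partial>Om)"
proof -
  interpret prob_space Om by (rule markov_process_prob_space)
  have sub: "subalgebra Om (nat_filtration Om X s)"
    using markov_process_measurable by (intro subalgebra_nat_filtration) simp
  interpret sigma_finite_subalgebra Om "nat_filtration Om X s"
    using sub by (intro finite_measure_subalgebra_is_sigma_finite finite_measure_subalgebra.intro
        finite_measure_axioms) (simp add: finite_measure_subalgebra_axioms_def)
  have Z_Om: "Z \<in> borel_measurable Om" by (rule measurable_from_subalg[OF sub Z])
  have fX: "(\<lambda>w. f (X u w)) \<in> borel_measurable Om" if "u \<ge> 0" for u :: real and f :: "'x \<Rightarrow>\<^sub>C real"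
    using measurable_compose[OF markov_process_measurable[OF that] bcontfun_borel_measurable] .
  have "integrable Om (\<lambda>w. Z w * f (X (s + t) w))"
  proof (rule integrable_const_bound[where B = "C * norm f"])
    have "\<bar>Z w\<bar> * \<bar>f (X (s + t) w)\<bar> \<le> C * norm f" for w
      using Z_bound[of w] norm_bounded[of f "X (s + t) w"]
      by (intro mult_mono) (auto intro: order_trans[OF abs_ge_zero])
    then show "AE w in Om. norm (Z w * f (X (s + t) w)) \<le> C * norm f"
      by (simp add: abs_mult)
  qed (use Z_Om fX assms in simp)
  then have "(\<integral>w. Z w * f (X (s + t) w) \<partial>Om)
      = (\<integral>w. Z w * real_cond_exp Om (nat_filtration Om X s) (\<lambda>w. f (X (s + t) w)) w \<partial>Om)"
    using Z fX assms by (intro real_cond_exp_intg(2)[symmetric]) auto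
  also have "\<dots> = (\<integral>w. Z w * T t f (X s w) \<partial>Om)"
  proof (rule integral_cong_AE)
    show "AE w in Om. Z w * real_cond_exp Om (nat_filtration Om X s) (\<lambda>w. f (X (s + t) w)) w
        = Z w * T t f (X s w)"
    proof -
      have "AE w in Om. real_cond_exp Om (nat_filtration Om X s) (\<lambda>w. f (X (s + t) w)) w
          = T t f (X s w)"
        using X assms unfolding markov_process_def by blast
      then show ?thesis by eventually_elim simp
    qed
  qed (use Z_Om fX assms borel_measurable_cond_exp2 in simp_all)
  finally show ?thesis .
qed

lemma markov_process_integral:
  fixes f :: "'x \<Rightarrow>\<^sub>C real"
  assumes "0 \<le> t"
  shows "(\<integral>w. f (X t w) \<partial>Om) = (\<integral>x. T t f x \<partial>P)"
proof -
  have "(\<integral>w. f (X t w) \<partial>Om) = (\<integral>w. T t f (X 0 w) \<partial>Om)"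
    using markov_process_integral_shift[of 0 t "\<lambda>_. 1" 1 f] assms by simp
  also have "\<dots> = (\<integral>x. T t f x \<partial>distr Om borel (X 0))"
    by (rule integral_distr[symmetric]) (simp_all add: markov_process_measurable bcontfun_borel_measurable)
  finally show ?thesis using X unfolding markov_process_def by simp
qed

lemma markov_process_integral_prod_merge:
  fixes f :: "nat \<Rightarrow> ('x \<Rightarrow>\<^sub>C real)" and t :: "nat \<Rightarrow> real"
  assumes t: "\<And>i. i \<le> k \<Longrightarrow> 0 \<le> t i \<and> t i \<le> t k" "t k \<le> t (Suc k)"
  shows "(\<integral>w. (\<Prod>i<Suc (Suc k). f i (X (t i) w)) \<partial>Om)
       = (\<integral>w. (\<Prod>i<Suc k. (f(k := bcontfun_mult (f k) (T (t (Suc k) - t k) (f (Suc k))))) i (X (t i) w)) \<partial>Om)"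
    (is "_ = ?rhs")
proof -
  define Z where "Z w = (\<Prod>i<Suc k. f i (X (t i) w))" for w
  have "Z \<in> borel_measurable (nat_filtration Om X (t k))"
    unfolding Z_def using t(1) markov_process_measurable
    by (intro borel_measurable_prod measurable_compose[OF measurable_nat_filtration bcontfun_borel_measurable])
      auto
  moreover have "\<bar>Z w\<bar> \<le> (\<Prod>i<Suc k. norm (f i))" for w
    unfolding Z_def abs_prod
  proof (intro prod_mono)
    show "0 \<le> \<bar>f i (X (t i) w)\<bar> \<and> \<bar>f i (X (t i) w)\<bar> \<le> norm (f i)" for i
      using norm_bounded[of "f i" "X (t i) w"] by simp
  qed
  ultimately have "(\<integral>w. Z w * f (Suc k) (X (t k + (t (Suc k) - t k)) w) \<partial>Om)
      = (\<integral>w. Z w * T (t (Suc k) - t k) (f (Suc k)) (X (t k) w) \<partial>Om)"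
    using t by (intro markov_process_integral_shift) auto
  then show ?thesis by (simp add: Z_def mult_ac)
qed

end

section \<open>Approximation of the semigroup by the chains\<close>

locale chain_approximation =
  fixes deg :: "'l \<Rightarrow> nat"
    and pd :: "'l \<Rightarrow> 'l \<Rightarrow> real"
    and M :: "nat \<Rightarrow> 'l \<Rightarrow> real"
    and \<iota> :: "nat \<Rightarrow> 'l \<Rightarrow> 'x::metric_space"
    and F :: "('x \<Rightarrow>\<^sub>C real) set"
    and Fm :: "nat \<Rightarrow> ('x \<Rightarrow>\<^sub>C real) set"
    and \<epsilon> :: "nat \<Rightarrow> real"
    and A :: "('x \<Rightarrow>\<^sub>C real) \<Rightarrow> ('x \<Rightarrow>\<^sub>C real)"
    and T :: "real \<Rightarrow> ('x \<Rightarrow>\<^sub>C real) \<Rightarrow> ('x \<Rightarrow>\<^sub>C real)"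
  assumes setting: "coherent_setting deg pd M"
    and F_dense: "closure F = UNIV"
    and Fm_subspace: "\<And>m. subspace (Fm m)"
    and Fm_findim: "\<And>m. \<exists>B. finite B \<and> span B = Fm m"
    and Fm_exhaust: "(\<Union>m. Fm m) = F"
    and eps_pos: "\<And>n. \<epsilon> n > 0"
    and eps_lim: "\<epsilon> \<longlonglongrightarrow> 0"
    and A4: "\<And>m f. f \<in> Fm m \<Longrightarrow> \<exists>g :: nat \<Rightarrow> ('x \<Rightarrow>\<^sub>C real).
               eventually (\<lambda>n. g n \<in> Fm m \<and>
                 (\<forall>lam\<in>level deg n. g n (\<iota> n lam)
                    = (Tapp deg pd M n (\<lambda>mu. f (\<iota> n mu)) lam - f (\<iota> n lam)) / \<epsilon> n)) sequentially
               \<and> g \<longlonglongrightarrow> A f"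
    and T_markov: "markov_semigroup T"
    and T_gen: "generator_graph T = closure {(f, A f) | f. f \<in> F}"
begin

abbreviation L :: "nat \<Rightarrow> 'l set" where "L n \<equiv> level deg n"

abbreviation Tn :: "nat \<Rightarrow> ('l \<Rightarrow> real) \<Rightarrow> 'l \<Rightarrow> real" where
  "Tn n \<equiv> kernel_op (L n) (Tmat deg pd M n)"

lemma finite_L: "finite (L n)"
  using setting unfolding coherent_setting_def by simp

lemma Tn_iterate_dist_le:
  "(\<And>l. l \<in> L n \<Longrightarrow> \<bar>a l - b l\<bar> \<le> c) \<Longrightarrow> l \<in> L n \<Longrightarrow> \<bar>(Tn n ^^ d) a l - (Tn n ^^ d) b l\<bar> \<le> c"
  by (rule kernel_op_iterate_dist_le[OF coherent_setting_Tmat_stochastic[OF setting]])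

lemma generator_quotient_tendsto:
  assumes "b \<in> F"
  shows "(\<lambda>n. (1 / \<epsilon> n) *\<^sub>R (T (\<epsilon> n) b - b)) \<longlonglongrightarrow> A b"
proof -
  have "(b, A b) \<in> {(f, A f) | f. f \<in> F}" using assms by blast
  then have "(b, A b) \<in> generator_graph T"
    unfolding T_gen using closure_subset by (rule subsetD[rotated])
  then have "((\<lambda>h. (1 / h) *\<^sub>R (T h b - b)) \<longlongrightarrow> A b) (at_right 0)"
    unfolding generator_graph_def by simp
  moreover have "filterlim \<epsilon> (at_right 0) sequentially"
    using eps_lim eps_pos by (intro tendsto_imp_filterlim_at_right) auto
  ultimately show ?thesis by (rule filterlim_compose)
qed

lemma Euler_step_on_level:
  fixes B :: "('x \<Rightarrow>\<^sub>C real) set" and G :: "('x \<Rightarrow>\<^sub>C real) \<Rightarrow> ('x \<Rightarrow>\<^sub>C real)"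
  assumes B: "finite B" "independent B" and h: "h \<in> span B"
    and G: "\<And>b l. b \<in> B \<Longrightarrow> l \<in> L n \<Longrightarrow> G b (\<iota> n l) = (Tn n (\<lambda>\<mu>. b (\<iota> n \<mu>)) l - b (\<iota> n l)) / \<epsilon> n"
    and l: "l \<in> L n"
  shows "(h + \<epsilon> n *\<^sub>R (\<Sum>b\<in>B. representation B h b *\<^sub>R G b)) (\<iota> n l) = Tn n (\<lambda>\<mu>. h (\<iota> n \<mu>)) l"
proof -
  have h_apply: "h x = (\<Sum>b\<in>B. representation B h b * b x)" for x
  proof -
    have "h x = (\<Sum>b\<in>B. representation B h b *\<^sub>R b) x"
      by (simp only: sum_representation_eq[OF B(2) h B(1) order_refl])
    also have "\<dots> = (\<Sum>b\<in>B. representation B h b * b x)" by (rule bcontfun_sum_apply)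
    finally show ?thesis .
  qed
  have "\<epsilon> n * (\<Sum>b\<in>B. representation B h b * G b (\<iota> n l))
      = (\<Sum>b\<in>B. representation B h b * Tn n (\<lambda>\<mu>. b (\<iota> n \<mu>)) l) - (\<Sum>b\<in>B. representation B h b * b (\<iota> n l))"
  proof -
    have "\<epsilon> n * (representation B h b * G b (\<iota> n l))
        = representation B h b * Tn n (\<lambda>\<mu>. b (\<iota> n \<mu>)) l - representation B h b * b (\<iota> n l)"
      if "b \<in> B" for b
    proof -
      have "\<epsilon> n * G b (\<iota> n l) = Tn n (\<lambda>\<mu>. b (\<iota> n \<mu>)) l - b (\<iota> n l)"
        using eps_pos[of n] G[OF that l] by simp
      then show ?thesis by (metis mult.left_commute right_diff_distrib)
    qed
    then show ?thesis by (simp add: sum_distrib_left sum_subtractf[symmetric])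
  qed
  also have "(\<Sum>b\<in>B. representation B h b * Tn n (\<lambda>\<mu>. b (\<iota> n \<mu>)) l) = Tn n (\<lambda>\<mu>. h (\<iota> n \<mu>)) l"
    unfolding h_apply by (rule kernel_op_sum[symmetric])
  finally show ?thesis by (simp add: bcontfun_sum_apply h_apply[of "\<iota> n l"])
qed

lemma discrete_generator_sequences:
  fixes B :: "('x \<Rightarrow>\<^sub>C real) set"
  assumes "B \<subseteq> Fm m"
  obtains G :: "('x \<Rightarrow>\<^sub>C real) \<Rightarrow> nat \<Rightarrow> ('x \<Rightarrow>\<^sub>C real)" where
    "\<And>b. b \<in> B \<Longrightarrow> \<forall>\<^sub>F n in sequentially. G b n \<in> Fm m \<and>
       (\<forall>l\<in>L n. G b n (\<iota> n l) = (Tn n (\<lambda>\<mu>. b (\<iota> n \<mu>)) l - b (\<iota> n l)) / \<epsilon> n)"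
    "\<And>b. b \<in> B \<Longrightarrow> G b \<longlonglongrightarrow> A b"
proof -
  have "\<forall>b\<in>B. \<exists>g. (\<forall>\<^sub>F n in sequentially. g n \<in> Fm m \<and>
      (\<forall>l\<in>L n. g n (\<iota> n l) = (Tn n (\<lambda>\<mu>. apply_bcontfun b (\<iota> n \<mu>)) l - b (\<iota> n l)) / \<epsilon> n)) \<and> g \<longlonglongrightarrow> A b"
  proof
    fix b assume "b \<in> B"
    with assms have "b \<in> Fm m" by blast
    from A4[OF this] show "\<exists>g. (\<forall>\<^sub>F n in sequentially. g n \<in> Fm m \<and>
      (\<forall>l\<in>L n. g n (\<iota> n l) = (Tn n (\<lambda>\<mu>. apply_bcontfun b (\<iota> n \<mu>)) l - b (\<iota> n l)) / \<epsilon> n)) \<and> g \<longlonglongrightarrow> A b"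
      by (simp add: Tapp_eq_kernel_op)
  qed
  then have "\<exists>G. \<forall>b\<in>B. (\<forall>\<^sub>F n in sequentially. G b n \<in> Fm m \<and>
      (\<forall>l\<in>L n. G b n (\<iota> n l) = (Tn n (\<lambda>\<mu>. apply_bcontfun b (\<iota> n \<mu>)) l - b (\<iota> n l)) / \<epsilon> n))
      \<and> G b \<longlonglongrightarrow> A b"
    by (rule bchoice)
  then obtain G where G: "\<forall>b\<in>B. (\<forall>\<^sub>F n in sequentially. G b n \<in> Fm m \<and>
      (\<forall>l\<in>L n. G b n (\<iota> n l) = (Tn n (\<lambda>\<mu>. apply_bcontfun b (\<iota> n \<mu>)) l - b (\<iota> n l)) / \<epsilon> n))
      \<and> G b \<longlonglongrightarrow> A b"
    by blast
  show thesis by (rule that[of G]) (use G in blast)+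
qed

lemma generator_error_tendsto:
  assumes "b \<in> F" "g \<longlonglongrightarrow> A b"
  shows "(\<lambda>n. norm (g n - (1 / \<epsilon> n) *\<^sub>R (T (\<epsilon> n) b - b))) \<longlonglongrightarrow> 0"
proof -
  have "(\<lambda>n. g n - (1 / \<epsilon> n) *\<^sub>R (T (\<epsilon> n) b - b)) \<longlonglongrightarrow> A b - A b"
    using assms generator_quotient_tendsto by (intro tendsto_diff)
  then show ?thesis by (simp add: tendsto_norm_zero)
qed

lemma Euler_scheme_on_Fm:
  obtains R :: "nat \<Rightarrow> ('x \<Rightarrow>\<^sub>C real) \<Rightarrow> ('x \<Rightarrow>\<^sub>C real)" and r :: "nat \<Rightarrow> real"
  where "r \<longlonglongrightarrow> 0"
    "\<forall>\<^sub>F n in sequentially. \<forall>h\<in>Fm m. R n h \<in> Fm m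
       \<and> norm (R n h - T (\<epsilon> n) h) \<le> \<epsilon> n * r n * norm h
       \<and> (\<forall>l\<in>L n. R n h (\<iota> n l) = Tn n (\<lambda>\<mu>. h (\<iota> n \<mu>)) l)"
proof -
  obtain B0 where "finite B0" "span B0 = Fm m" using Fm_findim by blast
  then obtain B where B: "finite B" "independent B" "span B = Fm m"
    by (rule subspace_finite_basis[OF Fm_subspace])
  obtain C where C: "C \<ge> 0" "\<And>h. h \<in> span B \<Longrightarrow> (\<Sum>b\<in>B. \<bar>representation B h b\<bar>) \<le> C * norm h"
    using representation_abs_sum_le[OF B(1,2)] by blast
  have "B \<subseteq> Fm m" using B(3) span_superset by blast
  obtain G where G: "\<And>b. b \<in> B \<Longrightarrow> \<forall>\<^sub>F n in sequentially. G b n \<in> Fm m \<and>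
      (\<forall>l\<in>L n. G b n (\<iota> n l) = (Tn n (\<lambda>\<mu>. b (\<iota> n \<mu>)) l - b (\<iota> n l)) / \<epsilon> n)"
    and G_lim: "\<And>b. b \<in> B \<Longrightarrow> G b \<longlonglongrightarrow> A b"
    using discrete_generator_sequences[OF \<open>B \<subseteq> Fm m\<close>] by blast
  define R where "R n h = h + \<epsilon> n *\<^sub>R (\<Sum>b\<in>B. representation B h b *\<^sub>R G b n)" for n h
  define r where "r n = C * (\<Sum>b\<in>B. norm (G b n - (1 / \<epsilon> n) *\<^sub>R (T (\<epsilon> n) b - b)))" for n
  show thesis
  proof
    have "(\<lambda>n. \<Sum>b\<in>B. norm (G b n - (1 / \<epsilon> n) *\<^sub>R (T (\<epsilon> n) b - b))) \<longlonglongrightarrow> (\<Sum>b\<in>B. 0)"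
      using G_lim \<open>B \<subseteq> Fm m\<close> Fm_exhaust by (intro tendsto_sum generator_error_tendsto) auto
    then show "r \<longlonglongrightarrow> 0" unfolding r_def using tendsto_mult_right_zero by simp
    have "\<forall>\<^sub>F n in sequentially. \<forall>b\<in>B. G b n \<in> Fm m \<and>
        (\<forall>l\<in>L n. G b n (\<iota> n l) = (Tn n (\<lambda>\<mu>. b (\<iota> n \<mu>)) l - b (\<iota> n l)) / \<epsilon> n)"
      using G by (intro eventually_ball_finite[OF B(1)]) auto
    then show "\<forall>\<^sub>F n in sequentially. \<forall>h\<in>Fm m. R n h \<in> Fm m
       \<and> norm (R n h - T (\<epsilon> n) h) \<le> \<epsilon> n * r n * norm h
       \<and> (\<forall>l\<in>L n. R n h (\<iota> n l) = Tn n (\<lambda>\<mu>. h (\<iota> n \<mu>)) l)"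
    proof eventually_elim
      case (elim n)
      show ?case
      proof (intro ballI conjI)
        fix h assume h: "h \<in> Fm m"
        show "R n h \<in> Fm m"
          unfolding R_def using h elim
          by (intro subspace_add[OF Fm_subspace] subspace_scale[OF Fm_subspace]
              subspace_sum[OF Fm_subspace]) auto
        have "norm (R n h - T (\<epsilon> n) h) \<le> \<epsilon> n * ((\<Sum>b\<in>B. \<bar>representation B h b\<bar>)
            * (\<Sum>b\<in>B. norm (G b n - (1 / \<epsilon> n) *\<^sub>R (T (\<epsilon> n) b - b))))"
          unfolding R_def using h B(3) eps_pos[of n] markov_semigroup_linear[OF T_markov, of "\<epsilon> n"]
          by (intro norm_Euler_step_diff_le[OF B(1,2)]) auto
        also have "\<dots> \<le> \<epsilon> n * (C * norm h * (\<Sum>b\<in>B. norm (G b n - (1 / \<epsilon> n) *\<^sub>R (T (\<epsilon> n) b - b))))"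
          using C(2)[of h] h B(3) eps_pos[of n]
          by (intro mult_left_mono mult_right_mono sum_nonneg) auto
        also have "\<dots> = \<epsilon> n * r n * norm h" by (simp add: r_def mult_ac)
        finally show "norm (R n h - T (\<epsilon> n) h) \<le> \<epsilon> n * r n * norm h" .
        show "R n h (\<iota> n l) = Tn n (\<lambda>\<mu>. h (\<iota> n \<mu>)) l" if "l \<in> L n" for l
          unfolding R_def using h B(3) elim that
          by (intro Euler_step_on_level[OF B(1,2)]) auto
      qed
    qed
  qed
qed

lemma iterates_uniformly_close_on_Fm:
  assumes "f \<in> Fm m" "(\<lambda>n. real (d n) * \<epsilon> n) \<longlonglongrightarrow> t" "t \<ge> 0"
  shows "uniformly_close L (\<lambda>n. (Tn n ^^ d n) (\<lambda>l. f (\<iota> n l))) (\<lambda>n l. T t f (\<iota> n l))"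
proof -
  obtain R r where r: "r \<longlonglongrightarrow> 0"
    and R: "\<forall>\<^sub>F n in sequentially. \<forall>h\<in>Fm m. R n h \<in> Fm m
       \<and> norm (R n h - T (\<epsilon> n) h) \<le> \<epsilon> n * r n * norm h
       \<and> (\<forall>l\<in>L n. R n h (\<iota> n l) = Tn n (\<lambda>\<mu>. h (\<iota> n \<mu>)) l)"
    by (rule Euler_scheme_on_Fm)
  have "(\<lambda>n. (R n ^^ d n) f) \<longlonglongrightarrow> T t f"
    using R by (intro markov_semigroup_iterates_tendsto[OF T_markov eps_pos r assms(2,3,1)])
      (auto elim: eventually_mono)
  then have "(\<lambda>n. norm ((R n ^^ d n) f - T t f)) \<longlonglongrightarrow> 0"
    by (simp add: tendsto_norm_zero_iff LIM_zero_iff)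
  then show ?thesis
  proof (rule uniformly_closeI)
    show "\<forall>\<^sub>F n in sequentially. \<forall>l\<in>L n.
        \<bar>(Tn n ^^ d n) (\<lambda>l. f (\<iota> n l)) l - T t f (\<iota> n l)\<bar> \<le> norm ((R n ^^ d n) f - T t f)"
      using R
    proof eventually_elim
      case (elim n)
      have iterate: "(R n ^^ j) f \<in> Fm m \<and>
          (\<forall>l\<in>L n. (R n ^^ j) f (\<iota> n l) = (Tn n ^^ j) (\<lambda>l. f (\<iota> n l)) l)" for j
      proof (induction j)
        case (Suc j)
        then show ?case using elim by (auto intro: kernel_op_cong)
      qed (use assms(1) in simp)
      show ?case
      proof
        fix l assume "l \<in> L n"
        then have "\<bar>(Tn n ^^ d n) (\<lambda>l. f (\<iota> n l)) l - T t f (\<iota> n l)\<bar>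
            = \<bar>((R n ^^ d n) f - T t f) (\<iota> n l)\<bar>"
          using iterate by simp
        also have "\<dots> \<le> norm ((R n ^^ d n) f - T t f)"
          using norm_bounded[of "(R n ^^ d n) f - T t f" "\<iota> n l"] by simp
        finally show "\<bar>(Tn n ^^ d n) (\<lambda>l. f (\<iota> n l)) l - T t f (\<iota> n l)\<bar> \<le> norm ((R n ^^ d n) f - T t f)" .
      qed
    qed
  qed
qed

lemma iterates_uniformly_close:
  fixes f :: "'x \<Rightarrow>\<^sub>C real"
  assumes g: "uniformly_close L g (\<lambda>n l. f (\<iota> n l))"
    and d: "(\<lambda>n. real (d n) * \<epsilon> n) \<longlonglongrightarrow> t" and "t \<ge> 0"
  shows "uniformly_close L (\<lambda>n. (Tn n ^^ d n) (g n)) (\<lambda>n l. T t f (\<iota> n l))"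
  unfolding uniformly_close_def
proof (intro allI impI)
  fix e :: real assume "e > 0"
  moreover have "f \<in> closure F" using F_dense by simp
  ultimately obtain f' where "f' \<in> F" and f': "dist f' f < e / 4"
    unfolding closure_approachable by (metis divide_pos_pos zero_less_numeral)
  then obtain m where "f' \<in> Fm m" using Fm_exhaust by blast
  have "\<forall>\<^sub>F n in sequentially. \<forall>l\<in>L n. \<bar>g n l - f (\<iota> n l)\<bar> \<le> e / 4"
    "\<forall>\<^sub>F n in sequentially. \<forall>l\<in>L n. \<bar>(Tn n ^^ d n) (\<lambda>l. f' (\<iota> n l)) l - T t f' (\<iota> n l)\<bar> \<le> e / 4"
    using g iterates_uniformly_close_on_Fm[OF \<open>f' \<in> Fm m\<close> d \<open>t \<ge> 0\<close>] \<open>e > 0\<close>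
    unfolding uniformly_close_def by (meson zero_less_divide_iff zero_less_numeral)+
  then show "\<forall>\<^sub>F n in sequentially. \<forall>l\<in>L n. \<bar>(Tn n ^^ d n) (g n) l - T t f (\<iota> n l)\<bar> \<le> e"
  proof eventually_elim
    case (elim n)
    have approx: "\<bar>f (\<iota> n l) - f' (\<iota> n l)\<bar> \<le> dist f' f" for l
      using norm_bounded[of "f - f'" "\<iota> n l"] by (simp add: dist_norm norm_minus_commute)
    have "\<bar>g n l - f' (\<iota> n l)\<bar> \<le> e / 4 + dist f' f" if "l \<in> L n" for l
      using bspec[OF elim(1) that] approx[of l] by linarith
    then have close: "\<bar>(Tn n ^^ d n) (g n) l - (Tn n ^^ d n) (\<lambda>l. f' (\<iota> n l)) l\<bar> \<le> e / 4 + dist f' f"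
      if "l \<in> L n" for l
      using that by (rule Tn_iterate_dist_le)
    have semigroup: "\<bar>T t f' x - T t f x\<bar> \<le> dist f' f" for x
      using norm_bounded[of "T t f' - T t f" x] markov_semigroup_norm_diff_le[OF T_markov \<open>t \<ge> 0\<close>, of f' f]
      by (simp add: dist_norm)
    show ?case
    proof
      fix l assume l: "l \<in> L n"
      show "\<bar>(Tn n ^^ d n) (g n) l - T t f (\<iota> n l)\<bar> \<le> e"
        using close[OF l] bspec[OF elim(2) l] semigroup[of "\<iota> n l"] f' by linarith
    qed
  qed
qed

end

section \<open>Convergence of finite-dimensional distributions\<close>

locale chain_process_approximation = chain_approximation deg pd M \<iota> F Fm \<epsilon> A T
  for deg :: "'l \<Rightarrow> nat" and pd M and \<iota> :: "nat \<Rightarrow> 'l \<Rightarrow> 'x::metric_space" and F Fm \<epsilon> A T +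
  fixes P :: "'x measure"
    and Om :: "'w measure"
    and X :: "real \<Rightarrow> 'w \<Rightarrow> 'x"
    and Omc :: "nat \<Rightarrow> 'v measure"
    and Y :: "nat \<Rightarrow> nat \<Rightarrow> 'v \<Rightarrow> 'l"
  assumes weak_conv: "\<And>f :: 'x \<Rightarrow>\<^sub>C real.
        (\<lambda>n. \<Sum>lam\<in>level deg n. M n lam * f (\<iota> n lam)) \<longlonglongrightarrow> (\<integral>x. f x \<partial>P)"
    and X_markov: "markov_process Om X T P"
    and Y_chain: "\<And>n. markov_chain (Omc n) (Y n) (level deg n) (M n) (Tmat deg pd M n)"
begin

lemma chain_integral_tendsto:
  fixes f :: "'x \<Rightarrow>\<^sub>C real"
  assumes g: "uniformly_close L g (\<lambda>n l. f (\<iota> n l))" and "0 \<le> t"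
  shows "(\<lambda>n. \<integral>w. g n (Y n (nat \<lfloor>t / \<epsilon> n\<rfloor>) w) \<partial>Omc n) \<longlonglongrightarrow> (\<integral>w. f (X t w) \<partial>Om)"
proof -
  have "uniformly_close L (\<lambda>n. (Tn n ^^ nat \<lfloor>t / \<epsilon> n\<rfloor>) (g n)) (\<lambda>n l. T t f (\<iota> n l))"
    using g real_floor_divide_times_tendsto[OF eps_pos eps_lim \<open>0 \<le> t\<close>] \<open>0 \<le> t\<close>
    by (rule iterates_uniformly_close)
  moreover have "\<And>n l. l \<in> L n \<Longrightarrow> M n l \<ge> 0" "\<And>n. (\<Sum>l\<in>L n. M n l) = 1"
    using setting unfolding coherent_setting_def by (auto intro: less_imp_le)
  ultimately have "(\<lambda>n. \<Sum>l\<in>L n. M n l * (Tn n ^^ nat \<lfloor>t / \<epsilon> n\<rfloor>) (g n) l) \<longlonglongrightarrow> (\<integral>x. T t f x \<partial>P)"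
    using weak_conv by (rule uniformly_close_weighted_sum_tendsto)
  then show ?thesis
    using markov_chain_integral_single[OF Y_chain finite_L]
      markov_process_integral[OF X_markov \<open>0 \<le> t\<close>] by simp
qed

lemma chain_prod_integral_tendsto:
  fixes t :: "nat \<Rightarrow> real" and f :: "nat \<Rightarrow> ('x \<Rightarrow>\<^sub>C real)" and g :: "nat \<Rightarrow> nat \<Rightarrow> 'l \<Rightarrow> real"
  assumes "0 \<le> t 0" "\<And>i j. i \<le> j \<Longrightarrow> j \<le> k \<Longrightarrow> t i \<le> t j"
    and "\<And>i. i \<le> k \<Longrightarrow> uniformly_close L (\<lambda>n. g n i) (\<lambda>n l. f i (\<iota> n l))"
  shows "(\<lambda>n. \<integral>w. (\<Prod>i<Suc k. g n i (Y n (nat \<lfloor>t i / \<epsilon> n\<rfloor>) w)) \<partial>Omc n)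
           \<longlonglongrightarrow> (\<integral>w. (\<Prod>i<Suc k. f i (X (t i) w)) \<partial>Om)"
  using assms
proof (induction k arbitrary: f g)
  case 0
  then show ?case using chain_integral_tendsto[where g="\<lambda>n. g n 0" and f="f 0" and t="t 0"] by simp
next
  case (Suc k)
  define \<kappa> where "\<kappa> n i = nat \<lfloor>t i / \<epsilon> n\<rfloor>" for n i
  define \<Delta> where "\<Delta> = t (Suc k) - t k"
  define f' where "f' = f(k := bcontfun_mult (f k) (T \<Delta> (f (Suc k))))"
  define g' where "g' n = (g n)(k := \<lambda>l. g n k l * (Tn n ^^ (\<kappa> n (Suc k) - \<kappa> n k)) (g n (Suc k)) l)" for n
  have t_nonneg: "0 \<le> t i" if "i \<le> Suc k" for i using Suc.prems(1) Suc.prems(2)[of 0 i] that by simp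
  have \<kappa>_mono: "\<kappa> n i \<le> \<kappa> n j" if "i \<le> j" "j \<le> Suc k" for n i j
    unfolding \<kappa>_def using Suc.prems(2)[OF that] eps_pos[of n]
    by (intro nat_mono floor_mono divide_right_mono) auto
  have "uniformly_close L (\<lambda>n. (Tn n ^^ (\<kappa> n (Suc k) - \<kappa> n k)) (g n (Suc k))) (\<lambda>n l. T \<Delta> (f (Suc k)) (\<iota> n l))"
    using Suc.prems t_nonneg unfolding \<kappa>_def \<Delta>_def
    by (intro iterates_uniformly_close real_floor_divide_diff_times_tendsto eps_pos eps_lim) auto
  then have "uniformly_close L (\<lambda>n. g' n k) (\<lambda>n l. f' k (\<iota> n l))"
    unfolding g'_def f'_def using Suc.prems(3)[of k]
    by (simp add: uniformly_close_mult[OF _ _ abs_bcontfun_le abs_bcontfun_le])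
  then have "(\<lambda>n. \<integral>w. (\<Prod>i<Suc k. g' n i (Y n (\<kappa> n i) w)) \<partial>Omc n)
      \<longlonglongrightarrow> (\<integral>w. (\<Prod>i<Suc k. f' i (X (t i) w)) \<partial>Om)"
    using Suc.prems unfolding \<kappa>_def by (intro Suc.IH) (auto simp: f'_def g'_def)
  moreover have "(\<integral>w. (\<Prod>i<Suc (Suc k). g n i (Y n (\<kappa> n i) w)) \<partial>Omc n)
      = (\<integral>w. (\<Prod>i<Suc k. g' n i (Y n (\<kappa> n i) w)) \<partial>Omc n)" for n
    unfolding g'_def using \<kappa>_mono
    by (intro markov_chain_integral_prod_merge[OF Y_chain finite_L]) auto
  moreover have "(\<integral>w. (\<Prod>i<Suc (Suc k). f i (X (t i) w)) \<partial>Om)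
      = (\<integral>w. (\<Prod>i<Suc k. f' i (X (t i) w)) \<partial>Om)"
    unfolding f'_def \<Delta>_def using Suc.prems(2) t_nonneg
    by (intro markov_process_integral_prod_merge[OF X_markov]) auto
  ultimately show ?case unfolding \<kappa>_def by simp
qed

lemma finite_dimensional_distributions_tendsto:
  fixes t :: "nat \<Rightarrow> real" and f :: "nat \<Rightarrow> ('x \<Rightarrow>\<^sub>C real)"
  assumes "k > 0 \<Longrightarrow> 0 \<le> t 0" "\<And>i. Suc i < k \<Longrightarrow> t i < t (Suc i)"
  shows "(\<lambda>n. \<integral>w. (\<Prod>i<k. f i (\<iota> n (Y n (nat \<lfloor>t i / \<epsilon> n\<rfloor>) w))) \<partial>Omc n)
           \<longlonglongrightarrow> (\<integral>w. (\<Prod>i<k. f i (X (t i) w)) \<partial>Om)"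
proof (cases k)
  case 0
  have "prob_space (Omc n)" for n using Y_chain[of n] unfolding markov_chain_def by simp
  then show ?thesis
    using 0 markov_process_prob_space[OF X_markov] by (simp add: prob_space.prob_space)
next
  case (Suc k')
  have "t i \<le> t j" if "i \<le> j" "j \<le> k'" for i j
    using bounded_lift_Suc_mono_le[where t=t and k=k, OF assms(2) that(1)] that(2) Suc by simp
  then have "(\<lambda>n. \<integral>w. (\<Prod>i<Suc k'. (\<lambda>n i l. f i (\<iota> n l)) n i (Y n (nat \<lfloor>t i / \<epsilon> n\<rfloor>) w)) \<partial>Omc n)
      \<longlonglongrightarrow> (\<integral>w. (\<Prod>i<Suc k'. f i (X (t i) w)) \<partial>Om)"
    using assms(1) Suc by (intro chain_prod_integral_tendsto uniformly_close_refl) auto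
  then show ?thesis using Suc by simp
qed

end

theorem proposition1p8:
  fixes deg :: "'l \<Rightarrow> nat"
    and pd :: "'l \<Rightarrow> 'l \<Rightarrow> real"
    and M :: "nat \<Rightarrow> 'l \<Rightarrow> real"
    and \<iota> :: "nat \<Rightarrow> 'l \<Rightarrow> 'x::metric_space"
    and F :: "('x \<Rightarrow>\<^sub>C real) set"
    and Fm :: "nat \<Rightarrow> ('x \<Rightarrow>\<^sub>C real) set"
    and \<epsilon> :: "nat \<Rightarrow> real"
    and A :: "('x \<Rightarrow>\<^sub>C real) \<Rightarrow> ('x \<Rightarrow>\<^sub>C real)"
    and T :: "real \<Rightarrow> ('x \<Rightarrow>\<^sub>C real) \<Rightarrow> ('x \<Rightarrow>\<^sub>C real)"
    and P :: "'x measure"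
    and Om :: "'w measure"
    and X :: "real \<Rightarrow> 'w \<Rightarrow> 'x"
    and Omc :: "nat \<Rightarrow> 'v measure"
    and Y :: "nat \<Rightarrow> nat \<Rightarrow> 'v \<Rightarrow> 'l"
  assumes setting: "coherent_setting deg pd M"
    and inj_iota: "\<And>n. inj_on (\<iota> n) (level deg n)"
    \<comment> \<open>(A1)\<close>
    and A1: "compact (UNIV :: 'x set)"
    \<comment> \<open>(A2)\<close>
    and A2: "\<And>U. open U \<Longrightarrow> U \<noteq> {} \<Longrightarrow>
               eventually (\<lambda>n. \<exists>lam\<in>level deg n. \<iota> n lam \<in> U) sequentially"
    \<comment> \<open>(A3)\<close>
    and F_subspace: "subspace F"
    and F_dense: "closure F = UNIV"
    and Fm_subspace: "\<And>m. subspace (Fm m)"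
    and Fm_findim: "\<And>m. \<exists>B. finite B \<and> span B = Fm m"
    and Fm_mono: "\<And>m. Fm m \<subseteq> Fm (Suc m)"
    and Fm_exhaust: "(\<Union>m. Fm m) = F"
    and A3_inj: "\<And>m. eventually (\<lambda>n. \<forall>f\<in>Fm m. \<forall>g\<in>Fm m.
                    (\<forall>lam\<in>level deg n. f (\<iota> n lam) = g (\<iota> n lam)) \<longrightarrow> f = g) sequentially"
    and A3_inv: "\<And>m. eventually (\<lambda>n. \<forall>f\<in>Fm m. \<exists>g\<in>Fm m.
                    \<forall>lam\<in>level deg n. Tapp deg pd M n (\<lambda>mu. f (\<iota> n mu)) lam = g (\<iota> n lam)) sequentially"
    \<comment> \<open>(A4)\<close>
    and eps_pos: "\<And>n. \<epsilon> n > 0"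
    and eps_lim: "\<epsilon> \<longlonglongrightarrow> 0"
    and A4: "\<And>m f. f \<in> Fm m \<Longrightarrow> \<exists>g :: nat \<Rightarrow> ('x \<Rightarrow>\<^sub>C real).
               eventually (\<lambda>n. g n \<in> Fm m \<and>
                 (\<forall>lam\<in>level deg n. g n (\<iota> n lam)
                    = (Tapp deg pd M n (\<lambda>mu. f (\<iota> n mu)) lam - f (\<iota> n lam)) / \<epsilon> n)) sequentially
               \<and> g \<longlonglongrightarrow> A f"
    \<comment> \<open>(A5)\<close>
    and A5: "const_bcontfun 1 \<in> F"
    \<comment> \<open>the closure of A generates the conservative Markov semigroup T\<close>
    and T_markov: "markov_semigroup T"
    and T_gen: "generator_graph T = closure {(f, A f) | f. f \<in> F}"
    \<comment> \<open>iota_n(M_n) converges weakly to the probability measure P\<close>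
    and P_prob: "prob_space P"
    and P_borel: "sets P = sets borel"
    and weak_conv: "\<And>f :: 'x \<Rightarrow>\<^sub>C real.
        (\<lambda>n. \<Sum>lam\<in>level deg n. M n lam * f (\<iota> n lam)) \<longlonglongrightarrow> (\<integral>x. f x \<partial>P)"
    and X_markov: "markov_process Om X T P"
    \<comment> \<open>lambda_n: stationary Markov chain on L_n, transition matrix T_n, initial law M_n\<close>
    and Y_chain: "\<And>n. markov_chain (Omc n) (Y n) (level deg n) (M n) (Tmat deg pd M n)"
  shows "\<And>(k::nat) (t::nat \<Rightarrow> real) (f::nat \<Rightarrow> ('x \<Rightarrow>\<^sub>C real)).
           (k > 0 \<Longrightarrow> 0 \<le> t 0) \<Longrightarrow> (\<And>i. Suc i < k \<Longrightarrow> t i < t (Suc i)) \<Longrightarrow>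
           (\<lambda>n. \<integral>w. (\<Prod>i<k. f i (\<iota> n (Y n (nat \<lfloor>t i / \<epsilon> n\<rfloor>) w))) \<partial>Omc n)
             \<longlonglongrightarrow> (\<integral>w. (\<Prod>i<k. f i (X (t i) w)) \<partial>Om)"
proof -
  interpret chain_process_approximation deg pd M \<iota> F Fm \<epsilon> A T P Om X Omc Y
    by (intro chain_process_approximation.intro chain_approximation.intro
        chain_process_approximation_axioms.intro; fact assms)
  fix k :: nat and t :: "nat \<Rightarrow> real" and f :: "nat \<Rightarrow> ('x \<Rightarrow>\<^sub>C real)"
  assume "k > 0 \<Longrightarrow> 0 \<le> t 0" and "\<And>i. Suc i < k \<Longrightarrow> t i < t (Suc i)"
  then show "(\<lambda>n. \<integral>w. (\<Prod>i<k. f i (\<iota> n (Y n (nat \<lfloor>t i / \<epsilon> n\<rfloor>) w))) \<partial>Omc n)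
      \<longlonglongrightarrow> (\<integral>w. (\<Prod>i<k. f i (X (t i) w)) \<partial>Om)"
    by (rule finite_dimensional_distributions_tendsto)
qed

end
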